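(* Let $(X,\mathbf R)$ be a symmetric association scheme with $D$ classes, cometric with respect to $E_0,\dots,E_D$. Fix $x\in X$, let $T=T(x)$ and $t\in\{1,\dots,D\}$. For $\chi\in V$ the following are equivalent: (i) $\chi$ is orthogonal to every irreducible $T$-module $W\subseteq V$ with $1\le r^*(W)\le t$; (ii) $F\chi$ is a relative $t$-design with respect to $x$ for every $F\in T$. Moreover, if every irreducible $T$-module in $V$ with dual endpoint at most $t$ is dual thin, then the weaker condition "$E_k^*(x)\chi$ is a relative $t$-design with respect to $x$ for every $0\le k\le D$" already implies (i) (and hence (ii)).
   Context: $(X,\mathbf R)$ is a symmetric association scheme with associate matrices $A_0=I,\dots,A_D$, Bose–Mesner algebra $M$, primitive idempotents $E_0=|X|^{-1}J,\dots,E_D$; cometric with respect to $E_0,\dots,E_D$ means each $E_j$ is a polynomial of degree exactly $j$ in $E_1$ under entrywise multiplication. $V=\mathbb C^X$ with standard basis $\{\hat y\}$ and standard Hermitian inner product. $E_i^*(x)$ is diagonal with $(E_i^*(x))_{yy}=(A_i)_{xy}$; $A_i^*(x)$ is diagonal with $(A_i^*(x))_{yy}=|X|(E_i)_{xy}$; $T(x)$ is the algebra generated by $M$ and the $A_i^*(x)$. For an irreducible $T(x)$-module $W$: dual endpoint $r^*(W)=\min\{j:E_jW\ne0\}$; dual thin means $\dim E_jW\le 1$ for all $j$. $\psi$ is a relative $t$-design with respect to $x$ if $E_j\psi$ and $E_j\hat x$ are linearly dependent for all $1\le j\le t$. *)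

theory Defs
  imports "HOL-Analysis.Analysis" "HOL-Computational_Algebra.Polynomial"
begin

text \<open>The vertex set X is a finite type 'x; V = complex^'x; matrices are complex^'x^'x.\<close>

definition cscaleM :: "complex \<Rightarrow> complex^'x^'y \<Rightarrow> complex^'x^'y" where
  "cscaleM c B = (\<chi> i j. c * B$i$j)"

definition allones :: "complex^'x^'x" where
  "allones = (\<chi> i j. 1)"

definition bose_mesner :: "(nat \<Rightarrow> complex^'x^'x) \<Rightarrow> nat \<Rightarrow> (complex^'x^'x) set" where
  "bose_mesner A D = {B. \<exists>c. B = (\<Sum>k\<le>D. cscaleM (c k) (A k))}"

definition symmetric_scheme ::
  "(nat \<Rightarrow> complex^'x::finite^'x) \<Rightarrow> (nat \<Rightarrow> complex^'x^'x) \<Rightarrow> nat \<Rightarrow> bool" where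
  "symmetric_scheme A E D \<longleftrightarrow>
     (\<forall>i\<le>D. \<forall>a b. A i $ a $ b = 0 \<or> A i $ a $ b = 1) \<and>
     (\<forall>i\<le>D. A i \<noteq> 0) \<and>
     A 0 = mat 1 \<and>
     (\<Sum>i\<le>D. A i) = allones \<and>
     (\<forall>i\<le>D. transpose (A i) = A i) \<and>
     (\<forall>i\<le>D. \<forall>j\<le>D. A i ** A j \<in> bose_mesner A D) \<and>
     (\<forall>i\<le>D. E i \<in> bose_mesner A D) \<and>
     (\<forall>i\<le>D. E i \<noteq> 0) \<and>
     (\<forall>i\<le>D. \<forall>j\<le>D. E i ** E j = (if i = j then E i else 0)) \<and>
     (\<Sum>i\<le>D. E i) = mat 1 \<and>
     E 0 = cscaleM (1 / of_nat CARD('x)) allones"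

text \<open>Cometric: each E j is a polynomial of degree exactly j in E 1 under entrywise
  (Hadamard) multiplication (the Hadamard 0-th power being J).\<close>
definition cometric :: "(nat \<Rightarrow> complex^'x^'x) \<Rightarrow> nat \<Rightarrow> bool" where
  "cometric E D \<longleftrightarrow>
     (\<forall>j\<le>D. \<exists>p :: complex poly. degree p = j \<and> E j = (\<chi> a b. poly p (E 1 $ a $ b)))"

definition dual_idem :: "(nat \<Rightarrow> complex^'x^'x) \<Rightarrow> 'x \<Rightarrow> nat \<Rightarrow> complex^'x^'x" where
  "dual_idem A x i = (\<chi> y z. if y = z then A i $ x $ y else 0)"

definition dual_adj :: "(nat \<Rightarrow> complex^'x::finite^'x) \<Rightarrow> 'x \<Rightarrow> nat \<Rightarrow> complex^'x^'x" where
  "dual_adj E x i = (\<chi> y z. if y = z then of_nat CARD('x) * E i $ x $ y else 0)"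

inductive_set terwilliger ::
  "(nat \<Rightarrow> complex^'x::finite^'x) \<Rightarrow> (nat \<Rightarrow> complex^'x^'x) \<Rightarrow> nat \<Rightarrow> 'x \<Rightarrow> (complex^'x^'x) set"
  for A E D x where
  gen_A: "i \<le> D \<Longrightarrow> A i \<in> terwilliger A E D x"
| gen_Astar: "i \<le> D \<Longrightarrow> dual_adj E x i \<in> terwilliger A E D x"
| one: "mat 1 \<in> terwilliger A E D x"
| add: "F \<in> terwilliger A E D x \<Longrightarrow> G \<in> terwilliger A E D x \<Longrightarrow> F + G \<in> terwilliger A E D x"
| scale: "F \<in> terwilliger A E D x \<Longrightarrow> cscaleM c F \<in> terwilliger A E D x"
| mult: "F \<in> terwilliger A E D x \<Longrightarrow> G \<in> terwilliger A E D x \<Longrightarrow> F ** G \<in> terwilliger A E D x"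

definition csubspace :: "(complex^'x) set \<Rightarrow> bool" where
  "csubspace W \<longleftrightarrow> 0 \<in> W \<and> (\<forall>u\<in>W. \<forall>v\<in>W. u + v \<in> W) \<and> (\<forall>c. \<forall>u\<in>W. c *s u \<in> W)"

definition T_module ::
  "(nat \<Rightarrow> complex^'x::finite^'x) \<Rightarrow> (nat \<Rightarrow> complex^'x^'x) \<Rightarrow> nat \<Rightarrow> 'x \<Rightarrow> (complex^'x) set \<Rightarrow> bool" where
  "T_module A E D x W \<longleftrightarrow> csubspace W \<and> (\<forall>F\<in>terwilliger A E D x. \<forall>w\<in>W. F *v w \<in> W)"

definition irred_T_module ::
  "(nat \<Rightarrow> complex^'x::finite^'x) \<Rightarrow> (nat \<Rightarrow> complex^'x^'x) \<Rightarrow> nat \<Rightarrow> 'x \<Rightarrow> (complex^'x) set \<Rightarrow> bool" where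
  "irred_T_module A E D x W \<longleftrightarrow> T_module A E D x W \<and> W \<noteq> {0} \<and>
     (\<forall>W'. T_module A E D x W' \<and> W' \<subseteq> W \<longrightarrow> W' = {0} \<or> W' = W)"

definition dual_endpoint :: "(nat \<Rightarrow> complex^'x::finite^'x) \<Rightarrow> (complex^'x) set \<Rightarrow> nat" where
  "dual_endpoint E W = (LEAST j. \<exists>w\<in>W. E j *v w \<noteq> 0)"

text \<open>Dual thin: dim (E_j W) \<le> 1 for all j (E_j W contained in a line).\<close>
definition dual_thin :: "(nat \<Rightarrow> complex^'x::finite^'x) \<Rightarrow> nat \<Rightarrow> (complex^'x) set \<Rightarrow> bool" where
  "dual_thin E D W \<longleftrightarrow> (\<forall>j\<le>D. \<exists>v. \<forall>w\<in>W. \<exists>c. E j *v w = c *s v)"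

definition herm :: "complex^'x::finite \<Rightarrow> complex^'x \<Rightarrow> complex" where
  "herm u v = (\<Sum>y\<in>UNIV. u $ y * cnj (v $ y))"

definition lin_dep2 :: "complex^'x \<Rightarrow> complex^'x \<Rightarrow> bool" where
  "lin_dep2 u v \<longleftrightarrow> (\<exists>a b. (a \<noteq> 0 \<or> b \<noteq> 0) \<and> a *s u + b *s v = 0)"

definition relative_design ::
  "(nat \<Rightarrow> complex^'x::finite^'x) \<Rightarrow> nat \<Rightarrow> 'x \<Rightarrow> complex^'x \<Rightarrow> bool" where
  "relative_design E t x \<psi> \<longleftrightarrow> (\<forall>j\<in>{1..t}. lin_dep2 (E j *v \<psi>) (E j *v axis x 1))"

end

theory Submission
  imports Defs
begin

text \<open>
  (i) \<open>\<Longrightarrow>\<close> (ii): the vectors orthogonal to all irreducible \<open>T\<close>-modules with dual endpoint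
  in \<open>{1..t}\<close> form a \<open>T\<close>-module, as \<open>T\<close> is closed under adjoints. Split \<open>F \<chi>' = p + q\<close> with \<open>p\<close>
  in the primary module \<open>M x\<close> and \<open>q \<perp> M x\<close>. Then \<open>E\<^sub>j p\<close> is a multiple of \<open>E\<^sub>j x\<close>, because
  \<open>E\<^sub>j M = \<complex> E\<^sub>j\<close>; and \<open>q\<close> lies in a \<open>T\<close>-module whose irreducible submodules all have dual
  endpoint \<open>> t\<close> (endpoint \<open>0\<close> is excluded by \<open>q \<perp> E\<^sub>0 x\<close>), so \<open>E\<^sub>j q = 0\<close> for \<open>j \<le> t\<close>.

  (ii) \<open>\<Longrightarrow>\<close> (i): if \<open>\<chi>'\<close> is not orthogonal to an irreducible \<open>W\<close> with dual endpoint
  \<open>r \<in> {1..t}\<close>, the projections of \<open>T \<chi>'\<close> onto \<open>W\<close> fill \<open>W\<close>, so some \<open>F \<chi>'\<close> projects onto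
  a nonzero \<open>v \<in> E\<^sub>r W\<close>. Pairing the linear dependence of \<open>E\<^sub>r F \<chi>'\<close> and \<open>E\<^sub>r x\<close> with \<open>v\<close>
  gives \<open>\<langle>F \<chi>', v\<rangle> = 0\<close>, since \<open>x \<perp> W\<close>; but \<open>\<langle>F \<chi>', v\<rangle> = \<langle>v, v\<rangle>\<close>.

  Dual thin case: the same pairing gives \<open>\<chi>' \<perp> E\<^sup>*\<^sub>k(x) v\<close> for all \<open>k\<close>. Cometricity makes the
  Krein parameters \<open>q\<^sup>k\<^sub>1\<^sub>j\<close> vanish for \<open>k > j + 1\<close>, so \<open>A\<^sup>*\<^sub>1(x)\<close> is tridiagonal with respect
  to \<open>E\<^sub>0, \<dots>, E\<^sub>D\<close>, and makes every \<open>A\<^sup>*\<^sub>i(x)\<close> a polynomial in \<open>A\<^sup>*\<^sub>1(x)\<close>. In a dual thin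
  irreducible \<open>W\<close> this lets \<open>A\<^sup>*\<^sub>1(x)\<close> reach every \<open>E\<^sub>n W\<close> from \<open>v\<close>, so \<open>W\<close> lies in the span
  of the \<open>E\<^sup>*\<^sub>k(x) v\<close>.
\<close>

section \<open>Hermitian form and complex matrices\<close>

definition conj_transpose :: "complex^'n^'m \<Rightarrow> complex^'m^'n" where
  "conj_transpose M = (\<chi> i j. cnj (M $ j $ i))"

lemma conj_transpose_nth [simp]: "conj_transpose M $ i $ j = cnj (M $ j $ i)"
  by (simp add: conj_transpose_def)

lemma conj_transpose_mult: "conj_transpose (M ** N) = conj_transpose N ** conj_transpose M"
  by (simp add: vec_eq_iff matrix_matrix_mult_def mult.commute)

lemma conj_transpose_conj_transpose [simp]: "conj_transpose (conj_transpose M) = M"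
  by (simp add: vec_eq_iff)

lemma conj_transpose_add: "conj_transpose (M + N) = conj_transpose M + conj_transpose N"
  by (simp add: vec_eq_iff)

lemma conj_transpose_diff: "conj_transpose (M - N) = conj_transpose M - conj_transpose N"
  by (simp add: vec_eq_iff)

lemma conj_transpose_cscaleM: "conj_transpose (cscaleM c M) = cscaleM (cnj c) (conj_transpose M)"
  by (simp add: vec_eq_iff cscaleM_def)

lemma conj_transpose_mat_1 [simp]: "conj_transpose (mat 1 :: complex^'n^'n) = mat 1"
  by (simp add: vec_eq_iff mat_def)

lemma herm_matrix_vector_mult: "herm (M *v u) v = herm u (conj_transpose M *v v)"
proof -
  have "herm (M *v u) v = (\<Sum>y\<in>UNIV. \<Sum>z\<in>UNIV. M$y$z * u$z * cnj (v$y))"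
    unfolding herm_def matrix_vector_mult_def by (simp add: sum_distrib_right)
  also have "\<dots> = (\<Sum>z\<in>UNIV. \<Sum>y\<in>UNIV. M$y$z * u$z * cnj (v$y))"
    by (rule sum.swap)
  also have "\<dots> = herm u (conj_transpose M *v v)"
    unfolding herm_def matrix_vector_mult_def by (simp add: sum_distrib_left mult_ac)
  finally show ?thesis .
qed

lemma herm_add_left: "herm (u + v) w = herm u w + herm v w"
  by (simp add: herm_def distrib_right sum.distrib)

lemma herm_diff_left: "herm (u - v) w = herm u w - herm v w"
  by (simp add: herm_def left_diff_distrib sum_subtractf)

lemma herm_add_right: "herm w (u + v) = herm w u + herm w v"
  by (simp add: herm_def distrib_left sum.distrib)

lemma herm_zero_right [simp]: "herm w 0 = 0"
  by (simp add: herm_def)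

lemma herm_scale_left: "herm (c *s u) w = c * herm u w"
  by (simp add: herm_def sum_distrib_left mult_ac)

lemma herm_scale_right: "herm w (c *s u) = cnj c * herm w u"
  by (simp add: herm_def sum_distrib_left mult_ac)

lemma herm_zero_left [simp]: "herm 0 w = 0"
  by (simp add: herm_def)

lemma herm_self: "herm u u = of_real (\<Sum>y\<in>UNIV. (cmod (u $ y))\<^sup>2)"
proof -
  have "herm u u = (\<Sum>y\<in>UNIV. of_real ((cmod (u $ y))\<^sup>2))"
    by (simp only: herm_def complex_norm_square)
  then show ?thesis
    by (simp only: of_real_sum)
qed

lemma herm_self_eq_0_iff: "herm u u = 0 \<longleftrightarrow> u = 0"
proof
  assume "herm u u = 0"
  then have "(\<Sum>y\<in>UNIV. (cmod (u $ y))\<^sup>2) = 0"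
    by (simp only: herm_self of_real_eq_0_iff)
  then show "u = 0"
    by (simp add: sum_nonneg_eq_0_iff vec_eq_iff)
qed simp

lemma herm_axis: "herm (axis x 1) w = cnj (w $ x)"
  by (simp add: herm_def axis_def if_distrib[where f="\<lambda>a. a * _"] cong: if_cong)

lemma csubspace_eq_vec_subspace: "csubspace = vec.subspace"
  by (simp add: fun_eq_iff csubspace_def vec.subspace_def)

definition herm_orth :: "(complex^'n) set \<Rightarrow> (complex^'n) set" where
  "herm_orth U = {v. \<forall>u\<in>U. herm v u = 0}"

lemma subspace_herm_orth: "vec.subspace (herm_orth U)"
  by (auto simp: vec.subspace_def herm_orth_def herm_add_left herm_scale_left)

lemma herm_orth_span: "herm_orth (vec.span S) = herm_orth S"
proof
  show "herm_orth (vec.span S) \<subseteq> herm_orth S"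
    using vec.span_superset by (auto simp: herm_orth_def)
next
  have subspace: "vec.subspace {u. herm v u = 0}" for v :: "complex^'n"
    by (auto simp: vec.subspace_def herm_add_right herm_scale_right)
  show "herm_orth S \<subseteq> herm_orth (vec.span S)"
  proof
    fix v assume v: "v \<in> herm_orth S"
    have "herm v u = 0" if "u \<in> vec.span S" for u
      by (rule vec.span_induct[OF that subspace]) (use v in \<open>simp add: herm_orth_def\<close>)
    then show "v \<in> herm_orth (vec.span S)"
      by (simp add: herm_orth_def)
  qed
qed

lemma herm_orth_Int_eq_0: "v \<in> U \<Longrightarrow> v \<in> herm_orth U \<Longrightarrow> v = 0"
  by (simp add: herm_orth_def flip: herm_self_eq_0_iff)

text \<open>The real part of the Hermitian form is the Euclidean inner product of \<open>\<real>\<^sup>2\<^sup>n\<close>, and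
  a complex subspace is closed under multiplication by \<open>\<i>\<close>; so the real orthogonal
  decomposition is the complex one.\<close>
lemma herm_orthogonal_decomposition:
  assumes W: "vec.subspace W"
  shows "\<exists>y\<in>W. v - y \<in> herm_orth W"
proof -
  have real_subspace: "subspace W"
  proof -
    have "r *\<^sub>R u = complex_of_real r *s u" for r and u :: "complex^'n"
      by (simp add: vec_eq_iff) (simp add: scaleR_conv_of_real)
    then show ?thesis
      using W unfolding vec.subspace_def subspace_def by metis
  qed
  have inner_eq: "u \<bullet> w = Re (herm u w)" for u w :: "complex^'n"
    by (simp add: inner_vec_def herm_def inner_complex_def Re_sum)
  obtain y z where y: "y \<in> span W" and z: "\<And>w. w \<in> span W \<Longrightarrow> orthogonal z w"
    and v: "v = y + z"
    using orthogonal_subspace_decomp_exists by metis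
  have "herm z w = 0" if w: "w \<in> W" for w
  proof -
    have Re_0: "Re (herm z u) = 0" if "u \<in> W" for u
      using z[OF span_base[OF that]] by (simp add: orthogonal_def inner_eq)
    have "\<i> *s w \<in> W"
      using w W by (simp add: vec.subspace_scale)
    then show ?thesis
      using Re_0[OF w] Re_0[of "\<i> *s w"]
      by (simp add: herm_scale_right complex_eq_iff)
  qed
  moreover have "y \<in> W"
    using y real_subspace span_eq_iff by blast
  ultimately show ?thesis
    using v by (intro bexI[of _ y]) (auto simp: herm_orth_def)
qed

lemma vec_dim_less:
  assumes "vec.subspace U" "vec.subspace N" "U \<subset> N"
  shows "vec.dim U < vec.dim N"
proof (rule vec.dim_psubset)
  have spans: "vec.span U = U" "vec.span N = N"
    using assms(1,2) vec.span_eq_iff by blast+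
  show "vec.span U \<subset> vec.span N"
    unfolding spans by (rule assms(3))
qed

lemma sum_swap_outer:
  "(\<Sum>q\<in>Q. \<Sum>y\<in>Y. \<Sum>w\<in>W. g q y w) = (\<Sum>y\<in>Y. \<Sum>w\<in>W. \<Sum>q\<in>Q. g q y w)"
proof -
  have "(\<Sum>q\<in>Q. \<Sum>y\<in>Y. \<Sum>w\<in>W. g q y w) = (\<Sum>y\<in>Y. \<Sum>q\<in>Q. \<Sum>w\<in>W. g q y w)"
    by (rule sum.swap)
  also have "\<dots> = (\<Sum>y\<in>Y. \<Sum>w\<in>W. \<Sum>q\<in>Q. g q y w)"
    by (rule sum.cong[OF refl], rule sum.swap)
  finally show ?thesis .
qed

lemma sum_swap_pairs:
  "(\<Sum>p\<in>P. \<Sum>q\<in>Q. \<Sum>y\<in>Y. \<Sum>w\<in>W. f p q y w) = (\<Sum>y\<in>Y. \<Sum>w\<in>W. \<Sum>p\<in>P. \<Sum>q\<in>Q. f p q y w)"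
proof -
  have "(\<Sum>p\<in>P. \<Sum>q\<in>Q. \<Sum>y\<in>Y. \<Sum>w\<in>W. f p q y w) = (\<Sum>p\<in>P. \<Sum>y\<in>Y. \<Sum>w\<in>W. \<Sum>q\<in>Q. f p q y w)"
    by (rule sum.cong[OF refl], rule sum_swap_outer)
  also have "\<dots> = (\<Sum>y\<in>Y. \<Sum>w\<in>W. \<Sum>p\<in>P. \<Sum>q\<in>Q. f p q y w)"
    by (rule sum_swap_outer)
  finally show ?thesis .
qed

lemma sum_herm_self_eq_0:
  fixes g :: "'p::finite \<Rightarrow> 'q::finite \<Rightarrow> complex^'n"
  assumes "(\<Sum>p\<in>UNIV. \<Sum>q\<in>UNIV. herm (g p q) (g p q)) = 0"
  shows "g p q = 0"
proof -
  define n where "n p q = (\<Sum>y\<in>UNIV. (cmod (g p q $ y))\<^sup>2)" for p q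
  have n_nonneg: "0 \<le> n p q" for p q
    by (simp add: n_def sum_nonneg)
  have "of_real (\<Sum>p\<in>UNIV. \<Sum>q\<in>UNIV. n p q) = (0::complex)"
    using assms by (simp add: herm_self n_def)
  then have "(\<Sum>p\<in>UNIV. \<Sum>q\<in>UNIV. n p q) = 0"
    by (simp only: of_real_eq_0_iff)
  then have "(\<Sum>q\<in>UNIV. n p q) = 0"
    by (simp add: sum_nonneg_eq_0_iff sum_nonneg n_nonneg)
  then have "n p q = 0"
    by (simp add: sum_nonneg_eq_0_iff n_nonneg)
  then have "herm (g p q) (g p q) = 0"
    by (simp add: herm_self n_def)
  then show ?thesis
    by (simp add: herm_self_eq_0_iff)
qed

interpretation cmat: vector_space "cscaleM :: complex \<Rightarrow> complex^'n^'m \<Rightarrow> complex^'n^'m"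
  by unfold_locales (simp_all add: cscaleM_def vec_eq_iff algebra_simps)

lemma cscaleM_nth [simp]: "cscaleM c M $ i $ j = c * M $ i $ j"
  by (simp add: cscaleM_def)

lemma cscaleM_matrix_vector_mult: "cscaleM c M *v u = c *s (M *v u)"
  by (simp add: vec_eq_iff matrix_vector_mult_def sum_distrib_left mult_ac)

lemma cscaleM_matrix_mult_left: "cscaleM c M ** N = cscaleM c (M ** N)"
  by (simp add: vec_eq_iff matrix_matrix_mult_def sum_distrib_left mult_ac)

lemma cscaleM_matrix_mult_right: "M ** cscaleM c N = cscaleM c (M ** N)"
  by (simp add: vec_eq_iff matrix_matrix_mult_def sum_distrib_left mult_ac)

lemma sum_matrix_vector_mult: "(\<Sum>i\<in>S. f i) *v u = (\<Sum>i\<in>S. f i *v u)"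
  by (induction S rule: infinite_finite_induct) (auto simp: matrix_vector_mult_add_rdistrib)

lemma matrix_mult_sum_right: "M ** (\<Sum>i\<in>S. f i) = (\<Sum>i\<in>S. M ** f i)"
  by (induction S rule: infinite_finite_induct) (auto simp: matrix_add_ldistrib)

lemma matrix_add_rdistrib: "(N + P) ** M = N ** M + P ** M"
  by (vector matrix_matrix_mult_def sum.distrib[symmetric] field_simps)

lemma matrix_mult_sum_left: "(\<Sum>i\<in>S. f i) ** M = (\<Sum>i\<in>S. f i ** M)"
  by (induction S rule: infinite_finite_induct) (auto simp: matrix_add_rdistrib)

lemma matrix_mult_diff_left: "(M::'a::ring_1^'n^'m) ** (N - P) = M ** N - M ** P"
  by (vector matrix_matrix_mult_def sum_subtractf[symmetric] field_simps)

lemma matrix_mult_diff_right: "((N::'a::ring_1^'n^'m) - P) ** M = N ** M - P ** M"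
  by (vector matrix_matrix_mult_def sum_subtractf[symmetric] field_simps)

lemma matrix_mult_conj_transpose_eq_0:
  fixes R :: "complex^'n^'m"
  assumes "R ** conj_transpose R = 0"
  shows "R = 0"
proof -
  have "herm (R $ a) (R $ a) = (R ** conj_transpose R) $ a $ a" for a
    by (simp add: herm_def matrix_matrix_mult_def)
  then show ?thesis
    using assms by (simp add: herm_self_eq_0_iff vec_eq_iff)
qed

lemma diag_matrix_vector_mult:
  "(\<chi> y z. if y = z then d y else 0) *v u = (\<chi> y. d y * u $ y)"
  by (simp add: vec_eq_iff matrix_vector_mult_def if_distrib[where f="\<lambda>a. a * _"] cong: if_cong)

lemma matrix_vector_mult_axis: "(M :: complex^'n^'m) *v axis x 1 = (\<chi> y. M $ y $ x)"
  by (simp add: vec_eq_iff matrix_vector_mult_def axis_def if_distrib cong: if_cong)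

section \<open>Symmetric association schemes\<close>

locale assoc_scheme =
  fixes A E :: "nat \<Rightarrow> complex^'x::finite^'x" and D :: nat
  assumes A_01: "\<And>i a b. i \<le> D \<Longrightarrow> A i $ a $ b = 0 \<or> A i $ a $ b = 1"
    and A_0: "A 0 = mat 1"
    and sum_A: "(\<Sum>i\<le>D. A i) = allones"
    and transpose_A: "\<And>i. i \<le> D \<Longrightarrow> transpose (A i) = A i"
    and A_mult_A: "\<And>i j. i \<le> D \<Longrightarrow> j \<le> D \<Longrightarrow> A i ** A j \<in> bose_mesner A D"
    and E_in_BM: "\<And>i. i \<le> D \<Longrightarrow> E i \<in> bose_mesner A D"
    and E_nonzero: "\<And>i. i \<le> D \<Longrightarrow> E i \<noteq> 0"
    and E_mult_E: "\<And>i j. i \<le> D \<Longrightarrow> j \<le> D \<Longrightarrow> E i ** E j = (if i = j then E i else 0)"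
    and sum_E: "(\<Sum>i\<le>D. E i) = mat 1"
    and E_0: "E 0 = cscaleM (1 / of_nat CARD('x)) allones"

lemma assoc_scheme_if_symmetric_scheme: "symmetric_scheme A E D \<Longrightarrow> assoc_scheme A E D"
  unfolding symmetric_scheme_def assoc_scheme_def by simp

context assoc_scheme
begin

abbreviation BM :: "(complex^'x^'x) set" where
  "BM \<equiv> bose_mesner A D"

lemma A_symmetric: "i \<le> D \<Longrightarrow> A i $ a $ b = A i $ b $ a"
  using transpose_A[of i] by (simp add: vec_eq_iff transpose_def)

lemma sum_A_nth: "(\<Sum>i\<le>D. A i $ a $ b) = 1"
  using arg_cong[OF sum_A, of "\<lambda>M. M $ a $ b"] by (simp add: sum_component allones_def)

lemma A_nth_eq_1_singleton: "\<exists>k. {i\<in>{..D}. A i $ a $ b = 1} = {k}"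
proof -
  have "(\<Sum>i\<le>D. A i $ a $ b) = (\<Sum>i\<le>D. of_nat (if A i $ a $ b = 1 then 1 else 0))"
  proof (rule sum.cong)
    fix i assume "i \<in> {..D}"
    then show "A i $ a $ b = of_nat (if A i $ a $ b = 1 then 1 else 0)"
      using A_01[of i a b] by auto
  qed simp
  also have "\<dots> = of_nat (\<Sum>i\<le>D. if A i $ a $ b = 1 then 1 else 0)"
    by (simp only: of_nat_sum)
  also have "(\<Sum>i\<le>D. if A i $ a $ b = 1 then 1 else 0) = card {i\<in>{..D}. A i $ a $ b = 1}"
    by (simp only: sum.inter_filter[symmetric] finite_atMost) simp
  finally have "of_nat (card {i\<in>{..D}. A i $ a $ b = 1}) = (1::complex)"
    using sum_A_nth by simp
  then have "card {i\<in>{..D}. A i $ a $ b = 1} = 1"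
    by (simp only: of_nat_eq_1_iff)
  then show ?thesis
    by (simp add: card_1_singleton_iff)
qed

lemma A_nth_unique:
  assumes "i \<le> D" "j \<le> D" "A i $ a $ b = 1" "A j $ a $ b = 1"
  shows "i = j"
proof -
  obtain k where k: "{i\<in>{..D}. A i $ a $ b = 1} = {k}"
    using A_nth_eq_1_singleton by blast
  have "i \<in> {k}" "j \<in> {k}"
    unfolding k[symmetric] using assms by auto
  then show ?thesis
    by simp
qed

lemma A_nth_exists: "\<exists>k\<le>D. A k $ a $ b = 1"
proof -
  obtain k where k: "{i\<in>{..D}. A i $ a $ b = 1} = {k}"
    using A_nth_eq_1_singleton by blast
  have "k \<in> {i\<in>{..D}. A i $ a $ b = 1}"
    unfolding k by simp
  then show ?thesis
    by auto
qed

lemma bose_mesner_nth: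
  assumes "B = (\<Sum>k\<le>D. cscaleM (c k) (A k))" and "k \<le> D" and "A k $ a $ b = 1"
  shows "B $ a $ b = c k"
proof -
  have "A l $ a $ b = 0" if "l \<le> D" "l \<noteq> k" for l
    using A_01[OF that(1)] A_nth_unique[OF that(1) assms(2) _ assms(3)] that(2) by blast
  then have "(\<Sum>l\<le>D. c l * A l $ a $ b) = (\<Sum>l\<le>D. if l = k then c k else 0)"
    using assms(3) by (intro sum.cong) auto
  then show ?thesis
    using assms(1,2) by (simp add: sum_component)
qed

lemma subspace_BM: "cmat.subspace BM"
  unfolding cmat.subspace_def
proof (intro conjI ballI allI)
  show "0 \<in> BM"
    unfolding bose_mesner_def by (intro CollectI exI[of _ "\<lambda>_. 0"]) simp
next
  fix B C assume "B \<in> BM" "C \<in> BM"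
  then obtain c d where "B = (\<Sum>k\<le>D. cscaleM (c k) (A k))" "C = (\<Sum>k\<le>D. cscaleM (d k) (A k))"
    by (auto simp: bose_mesner_def)
  then show "B + C \<in> BM"
    unfolding bose_mesner_def
    by (intro CollectI exI[of _ "\<lambda>k. c k + d k"]) (simp add: sum.distrib cmat.scale_left_distrib)
next
  fix a B assume "B \<in> BM"
  then obtain c where "B = (\<Sum>k\<le>D. cscaleM (c k) (A k))"
    by (auto simp: bose_mesner_def)
  then show "cscaleM a B \<in> BM"
    unfolding bose_mesner_def
    by (intro CollectI exI[of _ "\<lambda>k. a * c k"]) (simp add: cmat.scale_sum_right)
qed

lemma A_in_BM: "i \<le> D \<Longrightarrow> A i \<in> BM"
  unfolding bose_mesner_def
  by (intro CollectI exI[of _ "\<lambda>k. if k = i then 1 else 0"])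
     (simp add: if_distrib[where f="\<lambda>c. cscaleM c _"] cong: if_cong)

lemma BM_subset_span_A: "BM \<subseteq> cmat.span (A ` {..D})"
proof
  fix B assume "B \<in> BM"
  then obtain c where "B = (\<Sum>k\<le>D. cscaleM (c k) (A k))"
    by (auto simp: bose_mesner_def)
  moreover have "A k \<in> cmat.span (A ` {..D})" if "k \<le> D" for k
    using that by (simp add: cmat.span_base)
  ultimately show "B \<in> cmat.span (A ` {..D})"
    by (auto intro!: cmat.span_sum cmat.span_scale)
qed

lemma BM_mult: "B \<in> BM \<Longrightarrow> C \<in> BM \<Longrightarrow> B ** C \<in> BM"
proof -
  assume "B \<in> BM" "C \<in> BM"
  then obtain c d where B: "B = (\<Sum>k\<le>D. cscaleM (c k) (A k))" and C: "C = (\<Sum>k\<le>D. cscaleM (d k) (A k))"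
    by (auto simp: bose_mesner_def)
  have "B ** C = (\<Sum>l\<le>D. cscaleM (d l) (\<Sum>k\<le>D. cscaleM (c k) (A k ** A l)))"
    unfolding B C
    by (simp add: matrix_mult_sum_left matrix_mult_sum_right cscaleM_matrix_mult_left cscaleM_matrix_mult_right)
  also have "\<dots> \<in> BM"
    by (intro cmat.subspace_sum[OF subspace_BM] cmat.subspace_scale[OF subspace_BM] A_mult_A) auto
  finally show ?thesis .
qed

lemma BM_symmetric: "B \<in> BM \<Longrightarrow> B $ a $ b = B $ b $ a"
  by (auto simp: bose_mesner_def sum_component A_symmetric intro!: sum.cong)

lemma BM_commute: "B \<in> BM \<Longrightarrow> C \<in> BM \<Longrightarrow> B ** C = C ** B"
proof -
  assume B: "B \<in> BM" and C: "C \<in> BM"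
  have transpose_BM: "transpose F = F" if "F \<in> BM" for F
    using BM_symmetric[OF that] by (simp add: vec_eq_iff transpose_def)
  have "B ** C = transpose (B ** C)"
    using transpose_BM[OF BM_mult[OF B C]] by simp
  also have "\<dots> = C ** B"
    by (simp add: matrix_transpose_mul transpose_BM B C)
  finally show ?thesis .
qed

lemma conj_transpose_A:
  assumes "i \<le> D"
  shows "conj_transpose (A i) = A i"
proof -
  have "cnj (A i $ b $ a) = A i $ a $ b" for a b
    using A_01[OF assms, of b a] A_symmetric[OF assms, of a b] by auto
  then show ?thesis
    by (simp add: vec_eq_iff)
qed

lemma conj_transpose_BM: "B \<in> BM \<Longrightarrow> conj_transpose B \<in> BM"
proof -
  assume "B \<in> BM"
  then obtain c where B: "B = (\<Sum>k\<le>D. cscaleM (c k) (A k))"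
    by (auto simp: bose_mesner_def)
  have "conj_transpose B = (\<Sum>k\<le>D. cscaleM (cnj (c k)) (A k))"
    using conj_transpose_A by (auto simp: B vec_eq_iff sum_component cnj_sum)
  then show ?thesis
    by (auto simp: bose_mesner_def)
qed

lemma BM_diagonal_constant: "B \<in> BM \<Longrightarrow> B $ a $ a = B $ b $ b"
proof -
  assume "B \<in> BM"
  then obtain c where B: "B = (\<Sum>k\<le>D. cscaleM (c k) (A k))"
    by (auto simp: bose_mesner_def)
  have "A 0 $ a $ a = 1" "A 0 $ b $ b = 1"
    by (simp_all add: A_0 mat_def)
  then show ?thesis
    using bose_mesner_nth[OF B, of 0] by simp
qed

lemma E_idempotent: "i \<le> D \<Longrightarrow> E i ** E i = E i"
  by (simp add: E_mult_E)

text \<open>\<open>Q = E\<^sup>*\<close> lies in the commutative algebra \<open>BM\<close>, so \<open>R = Q - Q E\<close> satisfies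
  \<open>R R\<^sup>* = 0\<close>; hence \<open>Q = Q E\<close>, whose adjoint is \<open>E = E Q = Q\<close>.\<close>
lemma conj_transpose_E:
  assumes i: "i \<le> D"
  shows "conj_transpose (E i) = E i"
proof -
  define P where "P = E i"
  define Q where "Q = conj_transpose P"
  have P: "P \<in> BM" "P ** P = P"
    using E_in_BM E_idempotent i by (auto simp: P_def)
  have comm: "P ** Q = Q ** P"
    using BM_commute P conj_transpose_BM by (simp add: Q_def)
  have QPP: "(Q ** P) ** P = Q ** P"
    using P(2) by (simp flip: matrix_mul_assoc)
  have "P ** (Q ** P) = Q ** P"
    using comm QPP by (simp add: matrix_mul_assoc)
  then have QPQP: "(Q ** P) ** (Q ** P) = Q ** (Q ** P)"
    by (simp flip: matrix_mul_assoc)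
  define R where "R = Q - Q ** P"
  have "R ** conj_transpose R = (Q - Q ** P) ** (P - Q ** P)"
    by (simp add: R_def Q_def conj_transpose_diff conj_transpose_mult comm[unfolded Q_def])
  also have "\<dots> = Q ** (P - Q ** P) - (Q ** P) ** (P - Q ** P)"
    by (rule matrix_mult_diff_right)
  also have "\<dots> = Q ** P - Q ** (Q ** P) - ((Q ** P) ** P - (Q ** P) ** (Q ** P))"
    by (simp only: matrix_mult_diff_left)
  also have "\<dots> = 0"
    by (simp only: QPP QPQP diff_self)
  finally have "R = 0"
    by (rule matrix_mult_conj_transpose_eq_0)
  then have QP: "Q ** P = Q"
    by (simp add: R_def)
  have "P = conj_transpose Q"
    by (simp add: Q_def)
  also have "\<dots> = conj_transpose (Q ** P)"
    by (simp only: QP)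
  also have "\<dots> = Q ** P"
    by (simp add: conj_transpose_mult Q_def)
  finally have "P = Q"
    using QP by simp
  then show ?thesis
    by (simp add: P_def Q_def)
qed

lemma E_real:
  assumes "i \<le> D"
  shows "cnj (E i $ a $ b) = E i $ a $ b"
proof -
  have "cnj (E i $ a $ b) = conj_transpose (E i) $ b $ a"
    by simp
  then show ?thesis
    using conj_transpose_E[OF assms] BM_symmetric[OF E_in_BM[OF assms], of a b] by simp
qed

lemma E_symmetric: "i \<le> D \<Longrightarrow> E i $ a $ b = E i $ b $ a"
  using BM_symmetric[OF E_in_BM] by blast

lemma herm_E: "i \<le> D \<Longrightarrow> herm (E i *v u) v = herm u (E i *v v)"
  by (simp add: herm_matrix_vector_mult conj_transpose_E)

text \<open>A zero column forces a zero diagonal entry; the diagonal of \<open>E\<^sub>i\<close> is constant, and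
  \<open>(E\<^sub>i)\<^sub>a\<^sub>a = (E\<^sub>i E\<^sub>i\<^sup>*)\<^sub>a\<^sub>a\<close> is the squared norm of row \<open>a\<close>.\<close>
lemma E_axis_nonzero:
  assumes i: "i \<le> D"
  shows "E i *v axis x 1 \<noteq> 0"
proof
  assume "E i *v axis x 1 = 0"
  then have "E i $ x $ x = 0"
    by (simp add: matrix_vector_mult_axis vec_eq_iff)
  then have diag: "E i $ a $ a = 0" for a
    using BM_diagonal_constant[OF E_in_BM[OF i], of a x] by simp
  have "herm (E i $ a) (E i $ a) = E i $ a $ a" for a
  proof -
    have "herm (E i $ a) (E i $ a) = (E i ** conj_transpose (E i)) $ a $ a"
      by (simp add: herm_def matrix_matrix_mult_def)
    then show ?thesis
      by (simp add: conj_transpose_E E_idempotent i)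
  qed
  then have "E i = 0"
    using diag by (simp add: herm_self_eq_0_iff vec_eq_iff)
  then show False
    using E_nonzero i by simp
qed

lemma inj_on_E: "inj_on E {..D}"
proof (rule inj_onI, rule ccontr)
  fix i j assume ij: "i \<in> {..D}" "j \<in> {..D}" "E i = E j" "i \<noteq> j"
  then have "E j ** E j = 0"
    using E_mult_E[of i j] by simp
  then show False
    using E_idempotent[of j] E_nonzero[of j] ij(2) by simp
qed

lemma independent_E: "cmat.independent (E ` {..D})"
proof (rule cmat.independent_if_scalars_zero)
  fix f and F assume sum0: "(\<Sum>G\<in>E ` {..D}. cscaleM (f G) G) = 0" and F: "F \<in> E ` {..D}"
  then obtain j where j: "j \<le> D" and Fj: "F = E j"
    by auto
  have "E j ** G = (if G = E j then E j else 0)" if "G \<in> E ` {..D}" for G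
    using that j E_mult_E inj_on_E by (auto simp: inj_on_def)
  then have "E j ** (\<Sum>G\<in>E ` {..D}. cscaleM (f G) G) = cscaleM (f (E j)) (E j)"
    using j by (simp add: matrix_mult_sum_right cscaleM_matrix_mult_right if_distrib[where f="cscaleM _"]
        cong: if_cong)
  then show "f F = 0"
    using sum0 E_nonzero[OF j] by (simp add: Fj cmat.scale_eq_0_iff)
qed simp

text \<open>The \<open>D + 1\<close> independent idempotents lie in \<open>BM\<close>, which is spanned by \<open>D + 1\<close> matrices.\<close>
lemma BM_subset_span_E: "BM \<subseteq> cmat.span (E ` {..D})"
proof -
  have "A k \<in> cmat.span (E ` {..D})" if k: "k \<le> D" for k
  proof (rule ccontr)
    assume not_in: "A k \<notin> cmat.span (E ` {..D})"
    then have indep: "cmat.independent (insert (A k) (E ` {..D}))"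
      using independent_E by (simp add: cmat.independent_insert)
    have "insert (A k) (E ` {..D}) \<subseteq> cmat.span (A ` {..D})"
      using BM_subset_span_A A_in_BM E_in_BM k by auto
    from cmat.independent_span_bound[OF _ indep this]
    have "card (insert (A k) (E ` {..D})) \<le> card (A ` {..D})"
      by simp
    also have "\<dots> \<le> Suc D"
      using card_image_le[of "{..D}" A] by simp
    also have "Suc D < card (insert (A k) (E ` {..D}))"
    proof -
      have "A k \<notin> E ` {..D}"
        using not_in cmat.span_base[of "A k" "E ` {..D}"] by argo
      then show ?thesis
        using card_image[OF inj_on_E] by (simp add: card_insert_disjoint)
    qed
    finally show False
      by simp
  qed
  then have "cmat.span (A ` {..D}) \<subseteq> cmat.span (E ` {..D})"
    by (intro cmat.span_minimal) auto
  then show ?thesis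
    using BM_subset_span_A by blast
qed

lemma E_mult_BM:
  assumes j: "j \<le> D" and B: "B \<in> BM"
  shows "\<exists>\<theta>. E j ** B = cscaleM \<theta> (E j)"
proof (rule cmat.span_induct[of B "E ` {..D}"])
  show "B \<in> cmat.span (E ` {..D})"
    using B BM_subset_span_E by blast
  show "cmat.subspace {B. \<exists>\<theta>. E j ** B = cscaleM \<theta> (E j)}"
    unfolding cmat.subspace_def
  proof (intro conjI ballI allI; (elim CollectE exE)?)
    show "0 \<in> {B. \<exists>\<theta>. E j ** B = cscaleM \<theta> (E j)}"
      by (auto intro: exI[of _ 0])
  next
    fix B C \<theta> \<eta> assume "E j ** B = cscaleM \<theta> (E j)" "E j ** C = cscaleM \<eta> (E j)"
    then show "B + C \<in> {B. \<exists>\<theta>. E j ** B = cscaleM \<theta> (E j)}"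
      by (auto simp: matrix_add_ldistrib cmat.scale_left_distrib[symmetric])
  next
    fix c B \<theta> assume "E j ** B = cscaleM \<theta> (E j)"
    then show "cscaleM c B \<in> {B. \<exists>\<theta>. E j ** B = cscaleM \<theta> (E j)}"
      by (auto simp: cscaleM_matrix_mult_right)
  qed
  fix F assume "F \<in> E ` {..D}"
  then obtain i where "i \<le> D" "F = E i"
    by auto
  then have "E j ** F = cscaleM (if i = j then 1 else 0) (E j)"
    using j E_mult_E by simp
  then show "\<exists>\<theta>. E j ** F = cscaleM \<theta> (E j)" ..
qed

section \<open>The Terwilliger algebra and its modules\<close>

abbreviation TT :: "'x \<Rightarrow> (complex^'x^'x) set" where
  "TT x \<equiv> terwilliger A E D x"

lemma dual_adj_matrix_vector_mult:
  "dual_adj E x i *v u = (\<chi> y. of_nat CARD('x) * E i $ x $ y * u $ y)"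
  by (simp add: dual_adj_def diag_matrix_vector_mult mult.assoc)

lemma conj_transpose_dual_adj: "i \<le> D \<Longrightarrow> conj_transpose (dual_adj E x i) = dual_adj E x i"
  by (auto simp: vec_eq_iff dual_adj_def E_real)

lemma conj_transpose_terwilliger: "F \<in> TT x \<Longrightarrow> conj_transpose F \<in> TT x"
proof (induction rule: terwilliger.induct)
  case (gen_A i)
  then show ?case by (simp add: conj_transpose_A terwilliger.gen_A)
next
  case (gen_Astar i)
  then show ?case by (simp add: conj_transpose_dual_adj terwilliger.gen_Astar)
next
  case one
  then show ?case by (simp add: terwilliger.one)
next
  case (add F G)
  then show ?case by (simp add: conj_transpose_add terwilliger.add)
next
  case (scale F c)
  then show ?case by (simp add: conj_transpose_cscaleM terwilliger.scale)
next
  case (mult F G)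
  then show ?case by (simp add: conj_transpose_mult terwilliger.mult)
qed

lemma zero_terwilliger: "0 \<in> TT x"
  using terwilliger.scale[where c = 0, OF terwilliger.one] by simp

lemma sum_terwilliger: "(\<And>i. i \<in> S \<Longrightarrow> f i \<in> TT x) \<Longrightarrow> (\<Sum>i\<in>S. f i) \<in> TT x"
  by (induction S rule: infinite_finite_induct) (auto simp: zero_terwilliger terwilliger.add)

lemma BM_subset_terwilliger: "B \<in> BM \<Longrightarrow> B \<in> TT x"
  by (auto simp: bose_mesner_def intro!: sum_terwilliger terwilliger.scale terwilliger.gen_A)

lemma sum_dual_adj_matrix_vector_mult:
  "(\<Sum>i\<le>D. dual_adj E x i) *v u = (of_nat CARD('x) * u $ x) *s axis x 1"
proof -
  have "(\<Sum>i\<le>D. E i $ x $ y) = (if x = y then 1 else 0)" for y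
    using arg_cong[OF sum_E, of "\<lambda>M. M $ x $ y"] by (simp add: sum_component mat_def)
  moreover have "((\<Sum>i\<le>D. dual_adj E x i) *v u) $ y = of_nat CARD('x) * u $ y * (\<Sum>i\<le>D. E i $ x $ y)" for y
    by (simp add: sum_matrix_vector_mult sum_component dual_adj_matrix_vector_mult sum_distrib_left mult_ac)
  ultimately show ?thesis
    by (simp add: vec_eq_iff axis_def)
qed

lemma T_moduleD: "T_module A E D x W \<Longrightarrow> F \<in> TT x \<Longrightarrow> w \<in> W \<Longrightarrow> F *v w \<in> W"
  by (simp add: T_module_def)

lemma T_module_subspace: "T_module A E D x W \<Longrightarrow> vec.subspace W"
  by (simp add: T_module_def csubspace_eq_vec_subspace)

lemma T_moduleI:
  assumes Y: "vec.subspace Y"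
    and A_closed: "\<And>i y. i \<le> D \<Longrightarrow> y \<in> Y \<Longrightarrow> A i *v y \<in> Y"
    and dual_adj_closed: "\<And>i y. i \<le> D \<Longrightarrow> y \<in> Y \<Longrightarrow> dual_adj E x i *v y \<in> Y"
  shows "T_module A E D x Y"
proof -
  have "\<forall>y\<in>Y. F *v y \<in> Y" if "F \<in> TT x" for F
    using that
  proof (induction rule: terwilliger.induct)
    case (add F G)
    then show ?case
      using Y by (simp add: matrix_vector_mult_add_rdistrib vec.subspace_add)
  next
    case (scale F c)
    then show ?case
      using Y by (simp add: cscaleM_matrix_vector_mult vec.subspace_scale)
  next
    case (mult F G)
    then show ?case
      by (simp flip: matrix_vector_mul_assoc)
  qed (auto simp: A_closed dual_adj_closed)
  then show ?thesis
    using Y by (simp add: T_module_def csubspace_eq_vec_subspace)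
qed

lemma T_module_herm_orth:
  assumes "\<And>F u. F \<in> TT x \<Longrightarrow> u \<in> U \<Longrightarrow> F *v u \<in> U"
  shows "T_module A E D x (herm_orth U)"
  unfolding T_module_def csubspace_eq_vec_subspace
proof (intro conjI ballI subspace_herm_orth)
  fix F v assume "F \<in> TT x" "v \<in> herm_orth U"
  then show "F *v v \<in> herm_orth U"
    using assms[OF conj_transpose_terwilliger] by (simp add: herm_orth_def herm_matrix_vector_mult)
qed

lemma T_module_Int: "T_module A E D x W \<Longrightarrow> T_module A E D x W' \<Longrightarrow> T_module A E D x (W \<inter> W')"
  by (simp add: T_module_def csubspace_eq_vec_subspace vec.subspace_inter)

text \<open>Complete reducibility: a \<open>T\<close>-module splits into its proper submodules and their
  orthogonal complements, which are \<open>T\<close>-modules because \<open>T\<close> is closed under adjoints.\<close>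
lemma T_module_subset_if_irreducibles_subset:
  assumes N: "T_module A E D x N" and Q: "vec.subspace Q"
    and irred: "\<And>W. irred_T_module A E D x W \<Longrightarrow> W \<subseteq> N \<Longrightarrow> W \<subseteq> Q"
  shows "N \<subseteq> Q"
  using N irred
proof (induction "vec.dim N" arbitrary: N rule: less_induct)
  case less
  note N = less.prems(1)
  show ?case
  proof (cases "N = {0} \<or> irred_T_module A E D x N")
    case True
    then show ?thesis
      using less.prems(2) Q vec.subspace_0 by blast
  next
    case False
    then obtain W where W: "T_module A E D x W" "W \<subseteq> N" "W \<noteq> {0}" "W \<noteq> N"
      using N by (auto simp: irred_T_module_def)
    define W' where "W' = N \<inter> herm_orth W"
    have W': "T_module A E D x W'"
      unfolding W'_def using N W(1) by (intro T_module_Int T_module_herm_orth) (auto simp: T_moduleD)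
    obtain w where w: "w \<in> W" "w \<noteq> 0"
      using W(3) T_module_subspace[OF W(1)] vec.subspace_0 by blast
    have smaller: "vec.dim U < vec.dim N" if "T_module A E D x U" "U \<subseteq> N" "U \<noteq> N" for U
      using that T_module_subspace[OF N] T_module_subspace[OF that(1)] by (intro vec_dim_less) auto
    have "W \<subseteq> Q" "W' \<subseteq> Q"
    proof -
      show "W \<subseteq> Q"
        using less.hyps[OF smaller[OF W(1,2,4)] W(1)] less.prems(2) W(2) by blast
      have "w \<notin> W'"
        using w herm_orth_Int_eq_0 by (auto simp: W'_def)
      then have "W' \<noteq> N"
        using w(1) W(2) by blast
      moreover have "W' \<subseteq> N"
        by (simp add: W'_def)
      ultimately show "W' \<subseteq> Q"
        using less.hyps[OF smaller[OF W'] W'] less.prems(2) by blast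
    qed
    show "N \<subseteq> Q"
    proof
      fix n assume n: "n \<in> N"
      obtain y where y: "y \<in> W" "n - y \<in> herm_orth W"
        using herm_orthogonal_decomposition[OF T_module_subspace[OF W(1)]] by blast
      have "n - y \<in> W'"
        using y n W(2) T_module_subspace[OF N] by (auto simp: W'_def vec.subspace_diff)
      then show "n \<in> Q"
        using vec.subspace_add[OF Q] y(1) \<open>W \<subseteq> Q\<close> \<open>W' \<subseteq> Q\<close> by (metis diff_add_cancel subsetD)
    qed
  qed
qed

lemma exists_E_mult_nonzero:
  assumes "w \<noteq> 0"
  shows "\<exists>j\<le>D. E j *v w \<noteq> 0"
proof (rule ccontr)
  assume "\<not> ?thesis"
  then have "(\<Sum>j\<le>D. E j *v w) = 0"
    by (intro sum.neutral) auto
  moreover have "w = (\<Sum>j\<le>D. E j *v w)"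
    by (simp add: sum_E flip: sum_matrix_vector_mult)
  ultimately show False
    using assms by simp
qed

lemma dual_endpoint_le:
  assumes "w \<in> W" "w \<noteq> 0"
  shows "dual_endpoint E W \<le> D"
proof -
  obtain j where j: "j \<le> D" "E j *v w \<noteq> 0"
    using exists_E_mult_nonzero[OF assms(2)] by blast
  then have "\<exists>w\<in>W. E j *v w \<noteq> 0"
    using assms(1) by blast
  then have "dual_endpoint E W \<le> j"
    unfolding dual_endpoint_def by (rule Least_le)
  with j(1) show ?thesis
    by simp
qed

lemma E_dual_endpoint_nonzero:
  assumes "w \<in> W" "w \<noteq> 0"
  shows "\<exists>v\<in>W. E (dual_endpoint E W) *v v \<noteq> 0"
proof -
  have "\<exists>j. \<exists>w\<in>W. E j *v w \<noteq> 0"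
    using exists_E_mult_nonzero[OF assms(2)] assms(1) by blast
  then show ?thesis
    unfolding dual_endpoint_def by (rule LeastI_ex)
qed

lemma E_below_dual_endpoint:
  assumes "j < dual_endpoint E W" "w \<in> W"
  shows "E j *v w = 0"
  using not_less_Least[OF assms(1)[unfolded dual_endpoint_def]] assms(2) by blast

lemma exists_dual_endpoint_vector:
  assumes "T_module A E D x W" and "W \<noteq> {0}"
  obtains v where "v \<in> W" "v \<noteq> 0" "E (dual_endpoint E W) *v v = v"
proof -
  obtain w where w: "w \<in> W" "w \<noteq> 0"
    using assms T_module_subspace vec.subspace_0 by blast
  define r where "r = dual_endpoint E W"
  obtain u where u: "u \<in> W" "E r *v u \<noteq> 0"
    using E_dual_endpoint_nonzero[OF w] by (auto simp: r_def)
  have "r \<le> D"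
    using dual_endpoint_le[OF w] by (simp add: r_def)
  then show ?thesis
    using that[of "E r *v u"] u assms(1)
    by (simp add: r_def T_moduleD E_in_BM BM_subset_terwilliger matrix_vector_mul_assoc E_idempotent)
qed

lemma herm_axis_T_module:
  assumes W: "T_module A E D x W" and r: "1 \<le> dual_endpoint E W" and w: "w \<in> W"
  shows "herm (axis x 1) w = 0"
proof (rule ccontr)
  assume "herm (axis x 1) w \<noteq> 0"
  then have wx: "w $ x \<noteq> 0"
    by (simp add: herm_axis)
  have "(\<Sum>i\<le>D. dual_adj E x i) \<in> TT x"
    by (intro sum_terwilliger terwilliger.gen_Astar) simp
  from T_moduleD[OF W this w] have "(of_nat CARD('x) * w $ x) *s axis x 1 \<in> W"
    by (simp add: sum_dual_adj_matrix_vector_mult)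
  from vec.subspace_scale[OF T_module_subspace[OF W] this, of "1 / (of_nat CARD('x) * w $ x)"]
  have "axis x 1 \<in> W"
    using wx by (simp add: vector_smult_assoc)
  then have "dual_endpoint E W = 0"
    unfolding dual_endpoint_def using E_axis_nonzero[of 0] by (intro Least_eq_0) auto
  then show False
    using r by simp
qed

text \<open>Pairing the dependence \<open>a E\<^sub>r \<psi> + b E\<^sub>r x = 0\<close> with \<open>v \<in> E\<^sub>r W\<close> kills the second term,
  as \<open>x \<perp> W\<close>; and \<open>a = 0\<close> is impossible since \<open>E\<^sub>r x \<noteq> 0\<close>.\<close>
lemma herm_eq_0_if_relative_design:
  assumes W: "T_module A E D x W" "1 \<le> dual_endpoint E W" "dual_endpoint E W \<le> t" and t: "t \<le> D"
    and v: "v \<in> W" "E (dual_endpoint E W) *v v = v"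
    and design: "relative_design E t x \<psi>"
  shows "herm \<psi> v = 0"
proof -
  define r where "r = dual_endpoint E W"
  have r: "r \<le> D"
    using W(3) t by (simp add: r_def)
  have "r \<in> {1..t}"
    using W(2,3) by (simp add: r_def)
  then have "lin_dep2 (E r *v \<psi>) (E r *v axis x 1)"
    using design by (simp add: relative_design_def)
  then obtain a b where ab: "a \<noteq> 0 \<or> b \<noteq> 0" "a *s (E r *v \<psi>) + b *s (E r *v axis x 1) = 0"
    by (auto simp: lin_dep2_def)
  have "herm (E r *v \<psi>) v = herm \<psi> v" "herm (E r *v axis x 1) v = 0"
    using herm_E[OF r] v herm_axis_T_module[OF W(1,2) v(1)] by (simp_all add: r_def)
  then have "a * herm \<psi> v = 0"
    using arg_cong[OF ab(2), of "\<lambda>u. herm u v"] by (simp add: herm_add_left herm_scale_left)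
  moreover have "a \<noteq> 0"
    using ab E_axis_nonzero[OF r] by (auto simp: vec.scale_eq_0_iff)
  ultimately show ?thesis
    by simp
qed

section \<open>Orthogonality to low modules yields relative designs\<close>

definition low_irreducibles :: "'x \<Rightarrow> nat \<Rightarrow> (complex^'x) set" where
  "low_irreducibles x t =
     \<Union>{W. irred_T_module A E D x W \<and> 1 \<le> dual_endpoint E W \<and> dual_endpoint E W \<le> t}"

lemma herm_orth_low_irreducibles_iff:
  "\<chi>' \<in> herm_orth (low_irreducibles x t) \<longleftrightarrow>
     (\<forall>W. irred_T_module A E D x W \<and> 1 \<le> dual_endpoint E W \<and> dual_endpoint E W \<le> t
        \<longrightarrow> (\<forall>w\<in>W. herm \<chi>' w = 0))"
  by (auto simp: herm_orth_def low_irreducibles_def)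

lemma herm_orth_low_irreducibles_I:
  "(\<And>W. irred_T_module A E D x W \<Longrightarrow> 1 \<le> dual_endpoint E W \<Longrightarrow> dual_endpoint E W \<le> t
      \<Longrightarrow> \<chi>' \<in> herm_orth W)
   \<Longrightarrow> \<chi>' \<in> herm_orth (low_irreducibles x t)"
  by (auto simp: herm_orth_def low_irreducibles_def)

lemma T_module_herm_orth_low_irreducibles: "T_module A E D x (herm_orth (low_irreducibles x t))"
  by (rule T_module_herm_orth) (auto simp: low_irreducibles_def irred_T_module_def T_moduleD)

definition primary_module :: "'x \<Rightarrow> (complex^'x) set" where
  "primary_module x = {B *v axis x 1 | B. B \<in> BM}"

lemma subspace_primary_module: "vec.subspace (primary_module x)"
  unfolding vec.subspace_def primary_module_def
proof (intro conjI ballI allI)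
  show "0 \<in> {B *v axis x 1 | B. B \<in> BM}"
    using cmat.subspace_0[OF subspace_BM] by force
next
  fix u v assume "u \<in> {B *v axis x 1 | B. B \<in> BM}" "v \<in> {B *v axis x 1 | B. B \<in> BM}"
  then obtain B C where "B \<in> BM" "C \<in> BM" "u = B *v axis x 1" "v = C *v axis x 1"
    by blast
  then show "u + v \<in> {B *v axis x 1 | B. B \<in> BM}"
    using cmat.subspace_add[OF subspace_BM] by (force simp: matrix_vector_mult_add_rdistrib)
next
  fix c u assume "u \<in> {B *v axis x 1 | B. B \<in> BM}"
  then obtain B where "B \<in> BM" "u = B *v axis x 1"
    by blast
  then show "c *s u \<in> {B *v axis x 1 | B. B \<in> BM}"
    using cmat.subspace_scale[OF subspace_BM] by (force simp: cscaleM_matrix_vector_mult)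
qed

text \<open>\<open>A\<^sup>*\<^sub>i(x) (B x) = (|X| E\<^sub>i \<circ> B) x\<close>, and \<open>BM\<close> is closed under the entrywise product.\<close>
lemma dual_adj_mult_primary_module:
  assumes i: "i \<le> D" and B: "B \<in> BM"
  shows "dual_adj E x i *v (B *v axis x 1) \<in> primary_module x"
proof -
  obtain c where c: "E i = (\<Sum>k\<le>D. cscaleM (c k) (A k))"
    using E_in_BM[OF i] by (auto simp: bose_mesner_def)
  obtain d where d: "B = (\<Sum>k\<le>D. cscaleM (d k) (A k))"
    using B by (auto simp: bose_mesner_def)
  define C where "C = (\<Sum>k\<le>D. cscaleM (of_nat CARD('x) * c k * d k) (A k))"
  have "(dual_adj E x i *v (B *v axis x 1)) $ y = (C *v axis x 1) $ y" for y
  proof -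
    obtain k where k: "k \<le> D" "A k $ y $ x = 1"
      using A_nth_exists by blast
    have "E i $ x $ y = c k"
      using E_symmetric[OF i] bose_mesner_nth[OF c k] by simp
    moreover have "B $ y $ x = d k" "C $ y $ x = of_nat CARD('x) * c k * d k"
      using bose_mesner_nth[OF d k] bose_mesner_nth[OF C_def k] by simp_all
    ultimately show ?thesis
      by (simp add: dual_adj_matrix_vector_mult matrix_vector_mult_axis)
  qed
  moreover have "C \<in> BM"
    unfolding C_def bose_mesner_def by (rule CollectI, rule exI, rule refl)
  ultimately show ?thesis
    unfolding primary_module_def by (auto simp: vec_eq_iff)
qed

lemma T_module_primary_module: "T_module A E D x (primary_module x)"
proof (rule T_moduleI[OF subspace_primary_module])
  fix i u assume i: "i \<le> D" and "u \<in> primary_module x"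
  then obtain B where B: "B \<in> BM" "u = B *v axis x 1"
    by (auto simp: primary_module_def)
  show "A i *v u \<in> primary_module x"
    using B BM_mult[OF A_in_BM[OF i] B(1)]
    by (auto simp: primary_module_def matrix_vector_mul_assoc)
  show "dual_adj E x i *v u \<in> primary_module x"
    using dual_adj_mult_primary_module[OF i B(1)] B(2) by simp
qed

lemma primary_module_subset_herm_orth_low:
  "primary_module x \<subseteq> herm_orth (low_irreducibles x t)"
proof
  fix u assume "u \<in> primary_module x"
  then obtain B where B: "B \<in> BM" "u = B *v axis x 1"
    by (auto simp: primary_module_def)
  have "herm u w = 0"
    if W: "irred_T_module A E D x W" "1 \<le> dual_endpoint E W" and w: "w \<in> W" for W w
  proof -
    have W_mod: "T_module A E D x W"
      using W(1) by (simp add: irred_T_module_def)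
    then have "conj_transpose B *v w \<in> W"
      using T_moduleD BM_subset_terwilliger conj_transpose_BM B(1) w by blast
    then show ?thesis
      using herm_axis_T_module[OF W_mod W(2)] B(2) by (simp add: herm_matrix_vector_mult)
  qed
  then show "u \<in> herm_orth (low_irreducibles x t)"
    by (auto simp: herm_orth_def low_irreducibles_def)
qed

lemma E_0_mult_eq_0:
  assumes "herm v (E 0 *v axis x 1) = 0"
  shows "E 0 *v v = 0"
proof -
  have "herm v (E 0 *v axis x 1) = cnj (1 / of_nat CARD('x)) * (\<Sum>y\<in>UNIV. v $ y)"
    by (simp add: herm_def matrix_vector_mult_axis E_0 allones_def sum_divide_distrib)
  moreover have "E 0 *v v = (\<chi> a. 1 / of_nat CARD('x) * (\<Sum>y\<in>UNIV. v $ y))"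
    by (simp add: vec_eq_iff matrix_vector_mult_def E_0 allones_def sum_divide_distrib)
  ultimately show ?thesis
    using assms by (simp add: vec_eq_iff)
qed

text \<open>Every irreducible submodule of the complement of the low modules and of the primary module
  has dual endpoint \<open>0\<close> or \<open>> t\<close>; the first is excluded by orthogonality to \<open>E\<^sub>0 x\<close>.\<close>
lemma E_mult_herm_orth_low_primary:
  assumes v: "v \<in> herm_orth (low_irreducibles x t) \<inter> herm_orth (primary_module x)" and j: "j \<le> t"
  shows "E j *v v = 0"
proof -
  define N where "N = herm_orth (low_irreducibles x t) \<inter> herm_orth (primary_module x)"
  have N: "T_module A E D x N"
    unfolding N_def
    by (intro T_module_Int T_module_herm_orth_low_irreducibles T_module_herm_orth)
       (rule T_moduleD[OF T_module_primary_module])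
  have "N \<subseteq> {v. \<forall>j\<le>t. E j *v v = 0}"
  proof (rule T_module_subset_if_irreducibles_subset[OF N])
    show "vec.subspace {v. \<forall>j\<le>t. E j *v v = 0}"
      by (auto simp: vec.subspace_def matrix_vector_right_distrib vec.scale)
  next
    fix W assume W: "irred_T_module A E D x W" and WN: "W \<subseteq> N"
    obtain w where w: "w \<in> W" "w \<noteq> 0"
      using W T_module_subspace vec.subspace_0 by (auto simp: irred_T_module_def)
    have "E 0 *v u = 0" if "u \<in> W" for u
    proof (rule E_0_mult_eq_0)
      have "E 0 *v axis x 1 \<in> primary_module x"
        using E_in_BM[of 0] by (auto simp: primary_module_def)
      then show "herm u (E 0 *v axis x 1) = 0"
        using WN that by (auto simp: N_def herm_orth_def)
    qed
    then have r1: "1 \<le> dual_endpoint E W"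
      using E_dual_endpoint_nonzero[OF w] by (metis less_one not_less)
    have "\<not> dual_endpoint E W \<le> t"
    proof
      assume "dual_endpoint E W \<le> t"
      then have "w \<in> low_irreducibles x t"
        using W r1 w(1) by (auto simp: low_irreducibles_def)
      moreover have "w \<in> herm_orth (low_irreducibles x t)"
        using WN w(1) by (auto simp: N_def)
      ultimately show False
        using herm_orth_Int_eq_0 w(2) by blast
    qed
    then show "W \<subseteq> {v. \<forall>j\<le>t. E j *v v = 0}"
      using E_below_dual_endpoint[of _ W] by force
  qed
  then show ?thesis
    using v j by (auto simp: N_def)
qed

lemma relative_design_if_herm_orth_low:
  assumes t: "t \<le> D" and orth: "\<chi>' \<in> herm_orth (low_irreducibles x t)" and F: "F \<in> TT x"
  shows "relative_design E t x (F *v \<chi>')"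
  unfolding relative_design_def
proof
  fix j assume "j \<in> {1..t}"
  then have j: "j \<le> t" "j \<le> D"
    using t by auto
  define \<psi> where "\<psi> = F *v \<chi>'"
  have \<psi>: "\<psi> \<in> herm_orth (low_irreducibles x t)"
    using T_moduleD[OF T_module_herm_orth_low_irreducibles F orth] by (simp add: \<psi>_def)
  obtain p where p: "p \<in> primary_module x" "\<psi> - p \<in> herm_orth (primary_module x)"
    using herm_orthogonal_decomposition[OF subspace_primary_module] by blast
  have "\<psi> - p \<in> herm_orth (low_irreducibles x t)"
    using \<psi> p(1) primary_module_subset_herm_orth_low subspace_herm_orth by (blast intro: vec.subspace_diff)
  then have Eq: "E j *v (\<psi> - p) = 0"
    using E_mult_herm_orth_low_primary p(2) j(1) by blast
  obtain B where B: "B \<in> BM" "p = B *v axis x 1"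
    using p(1) by (auto simp: primary_module_def)
  obtain \<theta> where \<theta>: "E j ** B = cscaleM \<theta> (E j)"
    using E_mult_BM[OF j(2) B(1)] by blast
  have "E j *v \<psi> = E j *v p"
    using Eq by (simp add: matrix_vector_mult_diff_distrib)
  also have "\<dots> = \<theta> *s (E j *v axis x 1)"
    using B(2) \<theta> by (simp add: matrix_vector_mul_assoc cscaleM_matrix_vector_mult)
  finally have "1 *s (E j *v \<psi>) + (- \<theta>) *s (E j *v axis x 1) = 0"
    by simp
  then show "lin_dep2 (E j *v (F *v \<chi>')) (E j *v axis x 1)"
    unfolding lin_dep2_def \<psi>_def by (intro exI[of _ 1] exI[of _ "- \<theta>"]) simp
qed

section \<open>Relative designs in all \<open>T\<close>-directions force orthogonality\<close>

lemma T_module_projections: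
  assumes W: "T_module A E D x W"
  shows "T_module A E D x {y\<in>W. \<exists>F\<in>TT x. F *v \<chi>' - y \<in> herm_orth W}"
    (is "T_module A E D x ?P")
  unfolding T_module_def csubspace_eq_vec_subspace vec.subspace_def
proof (intro conjI ballI allI)
  note orth = subspace_herm_orth[of W] and W_subspace = T_module_subspace[OF W]
  show "0 \<in> ?P"
    using zero_terwilliger vec.subspace_0[OF orth] vec.subspace_0[OF W_subspace] by force
  fix y assume "y \<in> ?P"
  then obtain F where F: "F \<in> TT x" "F *v \<chi>' - y \<in> herm_orth W" and y: "y \<in> W"
    by blast
  {
    fix u assume "u \<in> ?P"
    then obtain G where "G \<in> TT x" "G *v \<chi>' - u \<in> herm_orth W" "u \<in> W"
      by blast
    moreover have "(F + G) *v \<chi>' - (y + u) = (F *v \<chi>' - y) + (G *v \<chi>' - u)"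
      by (simp add: matrix_vector_mult_add_rdistrib)
    ultimately show "y + u \<in> ?P"
      using F y vec.subspace_add[OF orth] vec.subspace_add[OF W_subspace] terwilliger.add
      by (metis (mono_tags, lifting) mem_Collect_eq)
  }
  fix c
  have "cscaleM c F *v \<chi>' - c *s y = c *s (F *v \<chi>' - y)"
    by (simp add: cscaleM_matrix_vector_mult vector_ssub_ldistrib)
  then show "c *s y \<in> ?P"
    using F y vec.subspace_scale[OF orth] vec.subspace_scale[OF W_subspace] terwilliger.scale
    by (metis (mono_tags, lifting) mem_Collect_eq)
next
  fix G y assume G: "G \<in> TT x" and "y \<in> ?P"
  then obtain F where F: "F \<in> TT x" "F *v \<chi>' - y \<in> herm_orth W" and y: "y \<in> W"
    by blast
  have orth_mod: "T_module A E D x (herm_orth W)"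
    by (rule T_module_herm_orth) (rule T_moduleD[OF W])
  have "(G ** F) *v \<chi>' - G *v y = G *v (F *v \<chi>' - y)"
    by (simp add: matrix_vector_mult_diff_distrib flip: matrix_vector_mul_assoc)
  then have "(G ** F) *v \<chi>' - G *v y \<in> herm_orth W"
    using T_moduleD[OF orth_mod G F(2)] by simp
  then show "G *v y \<in> ?P"
    using T_moduleD[OF W G y] terwilliger.mult[OF G F(1)] by blast
qed

lemma exists_terwilliger_projection:
  assumes W: "irred_T_module A E D x W" and not_orth: "\<chi>' \<notin> herm_orth W" and v: "v \<in> W"
  shows "\<exists>F\<in>TT x. F *v \<chi>' - v \<in> herm_orth W"
proof -
  define P where "P = {y\<in>W. \<exists>F\<in>TT x. F *v \<chi>' - y \<in> herm_orth W}"
  have W_mod: "T_module A E D x W"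
    using W by (simp add: irred_T_module_def)
  obtain y where y: "y \<in> W" "\<chi>' - y \<in> herm_orth W"
    using herm_orthogonal_decomposition[OF T_module_subspace[OF W_mod]] by blast
  then have "y \<in> P"
    using terwilliger.one by (force simp: P_def)
  moreover have "y \<noteq> 0"
    using y(2) not_orth by auto
  ultimately have "P \<noteq> {0}"
    by blast
  moreover have "T_module A E D x P" "P \<subseteq> W"
    unfolding P_def by (rule T_module_projections[OF W_mod]) auto
  ultimately have "P = W"
    using W by (auto simp: irred_T_module_def)
  then show ?thesis
    using v by (auto simp: P_def)
qed

lemma herm_orth_if_relative_designs:
  assumes t: "t \<le> D" and designs: "\<forall>F\<in>TT x. relative_design E t x (F *v \<chi>')"
    and W: "irred_T_module A E D x W" "1 \<le> dual_endpoint E W" "dual_endpoint E W \<le> t"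
  shows "\<chi>' \<in> herm_orth W"
proof (rule ccontr)
  assume not_orth: "\<chi>' \<notin> herm_orth W"
  define r where "r = dual_endpoint E W"
  have W_mod: "T_module A E D x W"
    using W(1) by (simp add: irred_T_module_def)
  obtain v where v: "v \<in> W" "v \<noteq> 0" "E r *v v = v"
    using exists_dual_endpoint_vector[OF W_mod] W(1) by (auto simp: irred_T_module_def r_def)
  obtain F where F: "F \<in> TT x" "F *v \<chi>' - v \<in> herm_orth W"
    using exists_terwilliger_projection[OF W(1) not_orth v(1)] by blast
  have "herm (F *v \<chi>') v = 0"
    using herm_eq_0_if_relative_design[OF W_mod W(2,3) t v(1)] v(3) designs F(1) by (simp add: r_def)
  moreover have "herm (F *v \<chi>' - v) v = 0"
    using F(2) v(1) by (simp add: herm_orth_def)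
  ultimately have "herm v v = 0"
    by (simp add: herm_diff_left)
  then show False
    using v(2) by (simp add: herm_self_eq_0_iff)
qed

end

section \<open>Consequences of the cometric property\<close>

locale cometric_scheme = assoc_scheme A E D
  for A E :: "nat \<Rightarrow> complex^'x::finite^'x" and D :: nat +
  assumes cometric: "cometric E D" and D_pos: "1 \<le> D"
begin

lemma E_hadamard_poly:
  assumes "j \<le> D"
  shows "\<exists>p. degree p = j \<and> (\<forall>a b. E j $ a $ b = (\<Sum>l\<le>j. coeff p l * (E 1 $ a $ b) ^ l))"
proof -
  obtain p :: "complex poly" where "degree p = j" "E j = (\<chi> a b. poly p (E 1 $ a $ b))"
    using cometric assms unfolding cometric_def by blast
  then show ?thesis
    by (auto simp: poly_altdef)
qed

lemma span_E_mono: "l \<le> m \<Longrightarrow> cmat.span (E ` {..l}) \<subseteq> cmat.span (E ` {..m})"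
  by (intro cmat.span_mono image_mono) auto

definition hadamard_power :: "nat \<Rightarrow> complex^'x^'x" where
  "hadamard_power l = (\<chi> a b. (E 1 $ a $ b) ^ l)"

lemma hadamard_power_in_span_E: "m \<le> D \<Longrightarrow> hadamard_power m \<in> cmat.span (E ` {..m})"
proof (induction m rule: less_induct)
  case (less m)
  show ?case
  proof (cases "m = 0")
    case True
    have "hadamard_power 0 = cscaleM (of_nat CARD('x)) (E 0)"
      by (simp add: vec_eq_iff hadamard_power_def E_0 allones_def)
    then show ?thesis
      using True by (simp add: cmat.span_scale cmat.span_base)
  next
    case False
    obtain p where p: "degree p = m" "\<And>a b. E m $ a $ b = (\<Sum>l\<le>m. coeff p l * (E 1 $ a $ b) ^ l)"
      using E_hadamard_poly[OF less.prems] by blast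
    have lead: "coeff p m \<noteq> 0"
      using p(1) False by (metis leading_coeff_0_iff degree_0)
    define R where "R = E m - (\<Sum>l<m. cscaleM (coeff p l) (hadamard_power l))"
    have "R = cscaleM (coeff p m) (hadamard_power m)"
      using p(2) by (simp add: vec_eq_iff R_def hadamard_power_def sum_component lessThan_Suc_atMost[symmetric])
    then have "hadamard_power m = cscaleM (1 / coeff p m) R"
      using lead by (simp add: vec_eq_iff)
    moreover have "hadamard_power l \<in> cmat.span (E ` {..m})" if "l < m" for l
      using less.IH[OF that] less.prems that span_E_mono[of l m] by auto
    then have "(\<Sum>l<m. cscaleM (coeff p l) (hadamard_power l)) \<in> cmat.span (E ` {..m})"
      by (auto intro!: cmat.span_sum cmat.span_scale)
    then have "R \<in> cmat.span (E ` {..m})"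
      unfolding R_def by (intro cmat.span_diff) (auto intro: cmat.span_base)
    ultimately show ?thesis
      by (simp add: cmat.span_scale)
  qed
qed

lemma sum_E_times_E:
  assumes "i \<le> D" "k \<le> D" "i \<noteq> k"
  shows "(\<Sum>a\<in>UNIV. \<Sum>b\<in>UNIV. E i $ a $ b * E k $ a $ b) = 0"
proof -
  have "(\<Sum>a\<in>UNIV. \<Sum>b\<in>UNIV. E i $ a $ b * E k $ a $ b) = (\<Sum>a\<in>UNIV. (E i ** E k) $ a $ a)"
    using E_symmetric[OF assms(2)] by (simp add: matrix_matrix_mult_def)
  then show ?thesis
    using E_mult_E[OF assms(1,2)] assms(3) by simp
qed

lemma sum_span_E_times_E:
  assumes B: "B \<in> cmat.span (E ` {..m})" and k: "m < k" "k \<le> D"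
  shows "(\<Sum>a\<in>UNIV. \<Sum>b\<in>UNIV. B $ a $ b * E k $ a $ b) = 0"
proof (rule cmat.span_induct[OF B])
  show "cmat.subspace {B. (\<Sum>a\<in>UNIV. \<Sum>b\<in>UNIV. B $ a $ b * E k $ a $ b) = 0}"
    by (auto simp: cmat.subspace_def distrib_right sum.distrib mult.assoc sum_distrib_left[symmetric])
next
  fix F assume "F \<in> E ` {..m}"
  then show "(\<Sum>a\<in>UNIV. \<Sum>b\<in>UNIV. F $ a $ b * E k $ a $ b) = 0"
    using k sum_E_times_E by auto
qed

text \<open>Vanishing of the Krein parameter \<open>q\<^sup>k\<^sub>1\<^sub>j\<close> for \<open>k > j + 1\<close>: \<open>E\<^sub>1 \<circ> E\<^sub>j\<close> is a combination of
  Hadamard powers \<open>E\<^sub>1\<^sup>\<circ>\<^sup>l\<close> with \<open>l \<le> j + 1\<close>.\<close>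
lemma krein_vanishing:
  assumes j: "j \<le> D" and k: "k \<le> D" and jk: "Suc j < k"
  shows "(\<Sum>a\<in>UNIV. \<Sum>b\<in>UNIV. E 1 $ a $ b * E j $ a $ b * E k $ a $ b) = 0"
proof -
  obtain p where p: "\<And>a b. E j $ a $ b = (\<Sum>l\<le>j. coeff p l * (E 1 $ a $ b) ^ l)"
    using E_hadamard_poly[OF j] by blast
  define M where "M = (\<Sum>l\<le>j. cscaleM (coeff p l) (hadamard_power (Suc l)))"
  have M_nth: "M $ a $ b = E 1 $ a $ b * E j $ a $ b" for a b
  proof -
    have "M $ a $ b = (\<Sum>l\<le>j. coeff p l * (E 1 $ a $ b) ^ Suc l)"
      by (simp add: M_def sum_component hadamard_power_def)
    also have "\<dots> = E 1 $ a $ b * (\<Sum>l\<le>j. coeff p l * (E 1 $ a $ b) ^ l)"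
      by (simp add: sum_distrib_left mult.left_commute)
    finally show ?thesis
      by (simp only: p)
  qed
  have "hadamard_power (Suc l) \<in> cmat.span (E ` {..Suc j})" if "l \<le> j" for l
    using hadamard_power_in_span_E[of "Suc l"] that jk k span_E_mono[of "Suc l" "Suc j"] by auto
  then have "M \<in> cmat.span (E ` {..Suc j})"
    unfolding M_def by (intro cmat.span_sum cmat.span_scale) auto
  from sum_span_E_times_E[OF this jk k] show ?thesis
    by (simp add: M_nth)
qed

lemma sum_E_mult_E_column:
  assumes "i \<le> D"
  shows "(\<Sum>c\<in>UNIV. E i $ c $ y * E i $ c $ w) = E i $ y $ w"
proof -
  have "(\<Sum>c\<in>UNIV. E i $ c $ y * E i $ c $ w) = (E i ** E i) $ y $ w"
    by (simp add: matrix_matrix_mult_def E_symmetric[OF assms, of _ y])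
  then show ?thesis
    by (simp add: E_idempotent assms)
qed

lemma herm_E_mult_self:
  assumes k: "k \<le> D" and real: "\<And>y. cnj (g $ y) = g $ y"
  shows "herm (E k *v g) (E k *v g) = (\<Sum>y\<in>UNIV. \<Sum>w\<in>UNIV. g $ y * g $ w * E k $ y $ w)"
proof -
  have "herm (E k *v g) (E k *v g) = herm g (E k *v g)"
    using herm_E[OF k] E_idempotent[OF k] by (simp add: matrix_vector_mul_assoc)
  also have "\<dots> = (\<Sum>y\<in>UNIV. g $ y * (\<Sum>w\<in>UNIV. E k $ y $ w * g $ w))"
    by (simp add: herm_def matrix_vector_mult_def real E_real[OF k])
  also have "\<dots> = (\<Sum>y\<in>UNIV. \<Sum>w\<in>UNIV. g $ y * g $ w * E k $ y $ w)"
    by (simp add: sum_distrib_left mult.left_commute mult.commute)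
  finally show ?thesis .
qed

lemma sum_herm_E_hadamard_columns:
  assumes j: "j \<le> D" and k: "k \<le> D"
  defines "g \<equiv> \<lambda>p q. (\<chi> y. E 1 $ p $ y * E j $ y $ q)"
  shows "(\<Sum>p\<in>UNIV. \<Sum>q\<in>UNIV. herm (E k *v g p q) (E k *v g p q))
    = (\<Sum>y\<in>UNIV. \<Sum>w\<in>UNIV. E 1 $ y $ w * E j $ y $ w * E k $ y $ w)"
proof -
  have factor: "(\<Sum>p\<in>UNIV. \<Sum>q\<in>UNIV. g p q $ y * g p q $ w * E k $ y $ w)
      = (\<Sum>p\<in>UNIV. E 1 $ p $ y * E 1 $ p $ w) * (\<Sum>q\<in>UNIV. E j $ y $ q * E j $ w $ q) * E k $ y $ w"
    for y w
  proof -
    have "(\<Sum>p\<in>UNIV. E 1 $ p $ y * E 1 $ p $ w) * (\<Sum>q\<in>UNIV. E j $ y $ q * E j $ w $ q) * E k $ y $ w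
        = (\<Sum>p\<in>UNIV. \<Sum>q\<in>UNIV. (E 1 $ p $ y * E 1 $ p $ w) * (E j $ y $ q * E j $ w $ q) * E k $ y $ w)"
      by (simp only: sum_product) (simp only: sum_distrib_right)
    also have "\<dots> = (\<Sum>p\<in>UNIV. \<Sum>q\<in>UNIV. g p q $ y * g p q $ w * E k $ y $ w)"
      by (intro sum.cong refl) (simp add: g_def mult_ac)
    finally show ?thesis
      by (rule sym)
  qed
  have "cnj (g p q $ y) = g p q $ y" for p q y
    using E_real[OF D_pos] E_real[OF j] by (simp add: g_def)
  then have "(\<Sum>p\<in>UNIV. \<Sum>q\<in>UNIV. herm (E k *v g p q) (E k *v g p q))
      = (\<Sum>y\<in>UNIV. \<Sum>w\<in>UNIV. \<Sum>p\<in>UNIV. \<Sum>q\<in>UNIV. g p q $ y * g p q $ w * E k $ y $ w)"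
    by (simp only: herm_E_mult_self[OF k]) (rule sum_swap_pairs)
  also have "\<dots> = (\<Sum>y\<in>UNIV. \<Sum>w\<in>UNIV. E 1 $ y $ w * E j $ y $ w * E k $ y $ w)"
    using sum_E_mult_E_column[of 1] sum_E_mult_E_column[OF j] E_symmetric[OF j] D_pos
    by (simp add: factor)
  finally show ?thesis .
qed

lemma E_mult_hadamard_column:
  assumes j: "j \<le> D" and k: "k \<le> D" and jk: "Suc j < k"
  shows "E k *v (\<chi> y. E 1 $ p $ y * E j $ y $ q) = 0"
  using sum_herm_self_eq_0[OF sum_herm_E_hadamard_columns[OF j k, unfolded krein_vanishing[OF j k jk]]]
  by simp

lemma E_dual_adj_E_eq_0:
  assumes j: "j \<le> D" and k: "k \<le> D" and jk: "Suc j < k"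
  shows "E k *v (dual_adj E x 1 *v (E j *v u)) = 0"
proof -
  have "dual_adj E x 1 *v (E j *v u)
      = (\<Sum>z\<in>UNIV. (of_nat CARD('x) * u $ z) *s (\<chi> y. E 1 $ x $ y * E j $ y $ z))"
    by (simp only: dual_adj_matrix_vector_mult)
       (simp add: vec_eq_iff matrix_vector_mult_def sum_component sum_distrib_left mult_ac)
  then show ?thesis
    using E_mult_hadamard_column[OF j k jk] by (simp add: vec.sum vec.scale)
qed

lemma dual_adj_closed_if_dual_adj_1_closed:
  assumes Y: "vec.subspace Y" and closed: "\<And>y. y \<in> Y \<Longrightarrow> dual_adj E x 1 *v y \<in> Y"
    and i: "i \<le> D" and y: "y \<in> Y"
  shows "dual_adj E x i *v y \<in> Y"
proof -
  have powers: "(\<chi> a. (E 1 $ x $ a) ^ l * y $ a) \<in> Y" for l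
  proof (induction l)
    case 0
    then show ?case
      using y by simp
  next
    case (Suc l)
    have "(\<chi> a. (E 1 $ x $ a) ^ Suc l * y $ a)
        = (1 / of_nat CARD('x)) *s (dual_adj E x 1 *v (\<chi> a. (E 1 $ x $ a) ^ l * y $ a))"
      by (simp add: vec_eq_iff dual_adj_matrix_vector_mult)
    then show ?case
      using vec.subspace_scale[OF Y closed[OF Suc.IH]] by simp
  qed
  obtain p where p: "\<And>a b. E i $ a $ b = (\<Sum>l\<le>i. coeff p l * (E 1 $ a $ b) ^ l)"
    using E_hadamard_poly[OF i] by blast
  have "dual_adj E x i *v y = (\<Sum>l\<le>i. (of_nat CARD('x) * coeff p l) *s (\<chi> a. (E 1 $ x $ a) ^ l * y $ a))"
    by (simp add: vec_eq_iff dual_adj_matrix_vector_mult sum_component p sum_distrib_left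
        sum_distrib_right mult_ac)
  also have "\<dots> \<in> Y"
    using powers by (intro vec.subspace_sum[OF Y] vec.subspace_scale[OF Y])
  finally show ?thesis .
qed

section \<open>Dual thin modules\<close>

definition dual_below :: "(complex^'x) set \<Rightarrow> nat \<Rightarrow> (complex^'x) set" where
  "dual_below W n = {y\<in>W. \<forall>l. n \<le> l \<longrightarrow> l \<le> D \<longrightarrow> E l *v y = 0}"

lemma subspace_dual_below: "vec.subspace W \<Longrightarrow> vec.subspace (dual_below W n)"
  by (auto simp: vec.subspace_def dual_below_def matrix_vector_right_distrib vec.scale)

lemma dual_below_0: "y \<in> dual_below W 0 \<Longrightarrow> y = 0"
  using exists_E_mult_nonzero by (auto simp: dual_below_def)

lemma dual_below_SucD:
  assumes "y \<in> dual_below W (Suc n)" and "n \<le> D \<Longrightarrow> E n *v y = 0"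
  shows "y \<in> dual_below W n"
  unfolding dual_below_def
proof (intro CollectI conjI allI impI)
  show "y \<in> W"
    using assms(1) by (simp add: dual_below_def)
  fix l assume "n \<le> l" "l \<le> D"
  then show "E l *v y = 0"
    using assms by (cases "l = n") (auto simp: dual_below_def)
qed

lemma dual_below_Suc_D: "dual_below W (Suc D) = W"
  by (auto simp: dual_below_def)

lemma A_mult_dual_below:
  assumes W: "T_module A E D x W" and i: "i \<le> D" and y: "y \<in> dual_below W n"
  shows "A i *v y \<in> dual_below W n"
proof -
  have "E l *v (A i *v y) = A i *v (E l *v y)" if "l \<le> D" for l
    using BM_commute[OF E_in_BM[OF that] A_in_BM[OF i]] by (simp add: matrix_vector_mul_assoc)
  then show ?thesis
    using y T_moduleD[OF W terwilliger.gen_A[OF i]] by (auto simp: dual_below_def)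
qed

lemma dual_adj_1_mult_dual_below:
  assumes W: "T_module A E D x W" and y: "y \<in> dual_below W n"
  shows "dual_adj E x 1 *v y \<in> dual_below W (Suc n)"
proof -
  have "E l *v (dual_adj E x 1 *v y) = 0" if l: "Suc n \<le> l" "l \<le> D" for l
  proof -
    have "(\<Sum>i\<le>D. E l *v (dual_adj E x 1 *v (E i *v y))) = E l *v (dual_adj E x 1 *v y)"
      by (simp add: sum_E flip: vec.sum sum_matrix_vector_mult)
    then have "E l *v (dual_adj E x 1 *v y) = (\<Sum>i\<le>D. E l *v (dual_adj E x 1 *v (E i *v y)))"
      by (rule sym)
    also have "\<dots> = 0"
    proof (rule sum.neutral, rule ballI)
      fix i assume "i \<in> {..D}"
      then show "E l *v (dual_adj E x 1 *v (E i *v y)) = 0"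
        using y l E_dual_adj_E_eq_0[of i l] by (cases "n \<le> i") (auto simp: dual_below_def)
    qed
    finally show ?thesis .
  qed
  then show ?thesis
    using y T_moduleD[OF W terwilliger.gen_Astar[OF D_pos]] by (auto simp: dual_below_def)
qed

lemma exists_dual_adj_1_escape:
  assumes W: "T_module A E D x W" and not_mod: "\<not> T_module A E D x (dual_below W n)"
  obtains y where "y \<in> dual_below W n" "dual_adj E x 1 *v y \<notin> dual_below W n"
proof -
  have subspace: "vec.subspace (dual_below W n)"
    by (rule subspace_dual_below[OF T_module_subspace[OF W]])
  show ?thesis
  proof (rule ccontr)
    assume "\<not> ?thesis"
    then have "\<And>y. y \<in> dual_below W n \<Longrightarrow> dual_adj E x 1 *v y \<in> dual_below W n"
      using that by blast
    then have "T_module A E D x (dual_below W n)"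
      using A_mult_dual_below[OF W] dual_adj_closed_if_dual_adj_1_closed[OF subspace]
      by (intro T_moduleI[OF subspace]) auto
    then show False
      using not_mod by simp
  qed
qed

lemma dual_endpoint_vector_in_dual_below:
  assumes v: "v \<in> W" "v \<noteq> 0" "E (dual_endpoint E W) *v v = v" and m: "dual_endpoint E W < m"
  shows "v \<in> dual_below W m"
proof -
  define r where "r = dual_endpoint E W"
  have r: "r \<le> D"
    using dual_endpoint_le[OF v(1,2)] by (simp add: r_def)
  have "E l *v v = 0" if l: "l \<le> D" "l \<noteq> r" for l
  proof -
    have "E l *v v = (E l ** E r) *v v"
      using v(3) by (simp add: r_def flip: matrix_vector_mul_assoc)
    then show ?thesis
      using E_mult_E[OF l(1) r] l(2) by simp
  qed
  then show ?thesis
    using v(1) m by (auto simp: dual_below_def r_def)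
qed

text \<open>Raising step: above the dual endpoint, \<open>dual_below W n\<close> is a proper nonzero subspace of
  the irreducible \<open>W\<close>, hence not a \<open>T\<close>-module, so \<open>A\<^sup>*\<^sub>1(x)\<close> leaves it; by tridiagonality it
  lands in \<open>dual_below W (n + 1)\<close> with a nonzero \<open>E\<^sub>n\<close>-component.\<close>
lemma exists_dual_below_witness:
  assumes W: "irred_T_module A E D x W"
    and v: "v \<in> W" "v \<noteq> 0" "E (dual_endpoint E W) *v v = v"
    and U: "v \<in> U" "\<And>u. u \<in> U \<Longrightarrow> dual_adj E x 1 *v u \<in> U" "dual_below W n \<subseteq> U"
    and n: "n \<le> D" and u: "u \<in> dual_below W (Suc n)" "E n *v u \<noteq> 0"
  obtains w where "w \<in> U" "w \<in> dual_below W (Suc n)" "E n *v w \<noteq> 0"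
proof -
  define r where "r = dual_endpoint E W"
  have W_mod: "T_module A E D x W"
    using W by (simp add: irred_T_module_def)
  note v_below = dual_endpoint_vector_in_dual_below[OF v, folded r_def]
  consider "n < r" | "n = r" | "r < n"
    by linarith
  then show ?thesis
  proof cases
    case 1
    have "u \<in> W"
      using u(1) by (simp add: dual_below_def)
    then show ?thesis
      using E_below_dual_endpoint[of n W u] 1 u(2) by (simp add: r_def)
  next
    case 2
    then show ?thesis
      using that[of v] U(1) v_below[of "Suc n"] v(2,3) by (simp add: r_def)
  next
    case 3
    have "dual_below W n \<noteq> {0}" "dual_below W n \<noteq> W"
      using v_below[OF 3] v(2) u n by (auto simp: dual_below_def)
    then have "\<not> T_module A E D x (dual_below W n)"
      using W by (auto simp: irred_T_module_def dual_below_def)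
    then obtain y where y: "y \<in> dual_below W n" "dual_adj E x 1 *v y \<notin> dual_below W n"
      by (rule exists_dual_adj_1_escape[OF W_mod])
    define w where "w = dual_adj E x 1 *v y"
    have w_below: "w \<in> dual_below W (Suc n)"
      using dual_adj_1_mult_dual_below[OF W_mod y(1)] by (simp add: w_def)
    have "E n *v w \<noteq> 0"
    proof
      assume "E n *v w = 0"
      then have "w \<in> dual_below W n"
        using w_below by (rule dual_below_SucD[rotated])
      then show False
        using y(2) by (simp add: w_def)
    qed
    moreover have "w \<in> U"
      using U(2,3) y(1) by (auto simp: w_def)
    ultimately show ?thesis
      using that w_below by blast
  qed
qed

lemma dual_thin_E_proportional:
  assumes "dual_thin E D W" "n \<le> D" "u \<in> W" "w \<in> W" "E n *v w \<noteq> 0"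
  shows "\<exists>c. E n *v u = c *s (E n *v w)"
proof -
  obtain b where "\<forall>y\<in>W. \<exists>c. E n *v y = c *s b"
    using assms(1,2) by (auto simp: dual_thin_def)
  then obtain c1 c2 where "E n *v u = c1 *s b" "E n *v w = c2 *s b"
    using assms(3,4) by blast
  then have "E n *v u = (c1 / c2) *s (E n *v w)"
    using assms(5) by (auto simp: vector_smult_assoc)
  then show ?thesis ..
qed

lemma dual_thin_subset:
  assumes W: "irred_T_module A E D x W" and thin: "dual_thin E D W"
    and v: "v \<in> W" "v \<noteq> 0" "E (dual_endpoint E W) *v v = v"
    and U: "vec.subspace U" "v \<in> U" "\<And>u. u \<in> U \<Longrightarrow> dual_adj E x 1 *v u \<in> U"
  shows "W \<subseteq> U"
proof -
  have "T_module A E D x W"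
    using W by (simp add: irred_T_module_def)
  then have W_subspace: "vec.subspace W"
    by (rule T_module_subspace)
  have "dual_below W n \<subseteq> U" for n
  proof (induction n)
    case 0
    then show ?case
      using dual_below_0 vec.subspace_0[OF U(1)] by blast
  next
    case (Suc n)
    show ?case
    proof
      fix u assume u: "u \<in> dual_below W (Suc n)"
      show "u \<in> U"
      proof (cases "n \<le> D \<and> E n *v u \<noteq> 0")
        case False
        then have "u \<in> dual_below W n"
          using u dual_below_SucD by blast
        then show ?thesis
          using Suc.IH by blast
      next
        case True
        obtain w where w: "w \<in> U" "w \<in> dual_below W (Suc n)" "E n *v w \<noteq> 0"
          using exists_dual_below_witness[OF W v U(2,3) Suc.IH _ u] True by blast
        have "u \<in> W" "w \<in> W"
          using u w(2) by (simp_all add: dual_below_def)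
        then obtain c where c: "E n *v u = c *s (E n *v w)"
          using dual_thin_E_proportional[OF thin] True w(3) by blast
        define u' where "u' = u - c *s w"
        have "u' \<in> dual_below W (Suc n)"
          using u w(2) subspace_dual_below[OF W_subspace]
          by (simp add: u'_def vec.subspace_diff vec.subspace_scale)
        moreover have "E n *v u' = 0"
          using c by (simp add: u'_def vec.diff vec.scale)
        ultimately have "u' \<in> dual_below W n"
          by (rule dual_below_SucD)
        then have "u' \<in> U"
          using Suc.IH by blast
        from vec.subspace_add[OF U(1) this vec.subspace_scale[OF U(1) w(1)], of c]
        show ?thesis
          by (simp add: u'_def)
      qed
    qed
  qed
  then show ?thesis
    using dual_below_Suc_D by blast
qed

lemma dual_idem_matrix_vector_mult: "dual_idem A x k *v v = (\<chi> y. A k $ x $ y * v $ y)"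
  by (simp add: dual_idem_def diag_matrix_vector_mult)

lemma conj_transpose_dual_idem:
  assumes "k \<le> D"
  shows "conj_transpose (dual_idem A x k) = dual_idem A x k"
proof -
  have "cnj (A k $ x $ y) = A k $ x $ y" for y
    using A_01[OF assms, of x y] by auto
  then show ?thesis
    by (simp add: vec_eq_iff dual_idem_def)
qed

lemma sum_dual_idem: "(\<Sum>k\<le>D. dual_idem A x k *v v) = v"
  by (simp add: vec_eq_iff sum_component dual_idem_matrix_vector_mult sum_A_nth
      flip: sum_distrib_right)

lemma dual_adj_1_mult_dual_idem:
  assumes k: "k \<le> D"
  shows "\<exists>c. dual_adj E x 1 *v (dual_idem A x k *v v) = c *s (dual_idem A x k *v v)"
proof -
  obtain c where c: "E 1 = (\<Sum>i\<le>D. cscaleM (c i) (A i))"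
    using E_in_BM[OF D_pos] by (auto simp: bose_mesner_def)
  have "E 1 $ x $ y * (A k $ x $ y * v $ y) = c k * (A k $ x $ y * v $ y)" for y
    using bose_mesner_nth[OF c k, of x y] A_01[OF k, of x y] by auto
  then have "dual_adj E x 1 *v (dual_idem A x k *v v) = (of_nat CARD('x) * c k) *s (dual_idem A x k *v v)"
    by (simp add: vec_eq_iff dual_adj_matrix_vector_mult dual_idem_matrix_vector_mult mult.assoc)
  then show ?thesis
    by blast
qed

lemma in_span_dual_idem: "v \<in> vec.span ((\<lambda>k. dual_idem A x k *v v) ` {..D})"
  by (subst sum_dual_idem[symmetric]) (auto intro: vec.span_sum vec.span_base)

lemma dual_adj_1_mult_span_dual_idem:
  assumes "u \<in> vec.span ((\<lambda>k. dual_idem A x k *v v) ` {..D})" (is "u \<in> ?U")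
  shows "dual_adj E x 1 *v u \<in> ?U"
proof (rule vec.span_induct[of u _ "\<lambda>u. dual_adj E x 1 *v u \<in> ?U", OF assms])
  show "vec.subspace {u. dual_adj E x 1 *v u \<in> ?U}"
    by (auto simp: vec.subspace_def vec.add vec.scale vec.span_add vec.span_scale vec.span_zero)
next
  fix u assume "u \<in> (\<lambda>k. dual_idem A x k *v v) ` {..D}"
  then obtain k where k: "k \<le> D" "u = dual_idem A x k *v v"
    by auto
  obtain c where "dual_adj E x 1 *v u = c *s u"
    using dual_adj_1_mult_dual_idem[OF k(1)] k(2) by blast
  moreover have "u \<in> ?U"
    using k by (intro vec.span_base) simp
  ultimately show "dual_adj E x 1 *v u \<in> ?U"
    by (simp add: vec.span_scale)
qed

lemma herm_orth_if_dual_thin_designs: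
  assumes t: "t \<le> D"
    and designs: "\<forall>k\<le>D. relative_design E t x (dual_idem A x k *v \<chi>')"
    and W: "irred_T_module A E D x W" "1 \<le> dual_endpoint E W" "dual_endpoint E W \<le> t"
    and thin: "dual_thin E D W"
  shows "\<chi>' \<in> herm_orth W"
proof -
  have W_mod: "T_module A E D x W"
    using W(1) by (simp add: irred_T_module_def)
  obtain v where v: "v \<in> W" "v \<noteq> 0" "E (dual_endpoint E W) *v v = v"
    using exists_dual_endpoint_vector[OF W_mod] W(1) by (auto simp: irred_T_module_def)
  define U where "U = vec.span ((\<lambda>k. dual_idem A x k *v v) ` {..D})"
  have "W \<subseteq> U"
    using dual_thin_subset[OF W(1) thin v] in_span_dual_idem dual_adj_1_mult_span_dual_idem
    by (simp add: U_def vec.subspace_span)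
  moreover have "herm \<chi>' (dual_idem A x k *v v) = 0" if k: "k \<le> D" for k
  proof -
    have "herm (dual_idem A x k *v \<chi>') v = 0"
      using herm_eq_0_if_relative_design[OF W_mod W(2,3) t v(1,3)] designs k by simp
    then show ?thesis
      by (simp add: herm_matrix_vector_mult conj_transpose_dual_idem k)
  qed
  then have "\<chi>' \<in> herm_orth U"
    unfolding U_def herm_orth_span by (auto simp: herm_orth_def)
  ultimately show ?thesis
    by (auto simp: herm_orth_def)
qed

end

theorem lemma4p5:
  fixes A E :: "nat \<Rightarrow> complex^'x::finite^'x" and D t :: nat and x :: 'x
    and \<chi>' :: "complex^'x"
  assumes "symmetric_scheme A E D"
    and "cometric E D"
    and "1 \<le> t" and "t \<le> D"
  shows "((\<forall>W. irred_T_module A E D x W \<and> 1 \<le> dual_endpoint E W \<and> dual_endpoint E W \<le> t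
              \<longrightarrow> (\<forall>w\<in>W. herm \<chi>' w = 0))
          \<longleftrightarrow> (\<forall>F\<in>terwilliger A E D x. relative_design E t x (F *v \<chi>')))
       \<and> ((\<forall>W. irred_T_module A E D x W \<and> dual_endpoint E W \<le> t \<longrightarrow> dual_thin E D W)
          \<longrightarrow> (\<forall>k\<le>D. relative_design E t x (dual_idem A x k *v \<chi>'))
          \<longrightarrow> (\<forall>W. irred_T_module A E D x W \<and> 1 \<le> dual_endpoint E W \<and> dual_endpoint E W \<le> t
              \<longrightarrow> (\<forall>w\<in>W. herm \<chi>' w = 0)))"
proof -
  interpret cometric_scheme A E D
    using assms assoc_scheme_if_symmetric_scheme by (simp add: cometric_scheme_def cometric_scheme_axioms_def)
  have designs_iff: "\<chi>' \<in> herm_orth (low_irreducibles x t) \<longleftrightarrow> (\<forall>F\<in>TT x. relative_design E t x (F *v \<chi>'))"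
    using relative_design_if_herm_orth_low[OF assms(4)] herm_orth_if_relative_designs[OF assms(4)]
    by (blast intro: herm_orth_low_irreducibles_I)
  have thin_designs: "\<chi>' \<in> herm_orth (low_irreducibles x t)"
    if "\<forall>W. irred_T_module A E D x W \<and> dual_endpoint E W \<le> t \<longrightarrow> dual_thin E D W"
      and "\<forall>k\<le>D. relative_design E t x (dual_idem A x k *v \<chi>')"
    using that herm_orth_if_dual_thin_designs[OF assms(4)] by (blast intro: herm_orth_low_irreducibles_I)
  show ?thesis
    unfolding herm_orth_low_irreducibles_iff[symmetric] using designs_iff thin_designs by blast
qed

end
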